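(* Let $G$ be a finitely generated group and $A$ a finitely generated abelian group on which $G$ acts with finite image in $\mathrm{Aut}(A)$. If a $2$-cocycle $\sigma:G\times G\to A$ is either right weakly bounded or left weakly bounded, then $\sigma$ is cohomologous to a $2$-cocycle that is both right and left weakly bounded.
   Context: The action is written $a\mapsto a^g$. A $2$-cocycle is $\sigma:G\times G\to A$ with $\sigma(g,h_1h_2)=\sigma(g,h_1)^{h_2}+\sigma(gh_1,h_2)-\sigma(h_1,h_2)$; two cocycles are cohomologous if they differ by $(g,h)\mapsto f(g)^h+f(h)-f(gh)$ for some $f:G\to A$. A cocycle $\sigma$ is left weakly bounded if $\sigma(g,G)$ is finite for every $g\in G$, and right weakly bounded if $\sigma(G,g)$ is finite for every $g\in G$. *)

theory Defs
  imports "HOL-Algebra.Algebra"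
begin

text \<open>The coefficient group A is a HOL-Algebra commutative group, written
multiplicatively (the paper writes A additively). The right action
a \<mapsto> a^g is act g a.\<close>

definition fin_gen_group :: "('a, 'm) monoid_scheme \<Rightarrow> bool" where
  "fin_gen_group G \<longleftrightarrow> (\<exists>S. finite S \<and> S \<subseteq> carrier G \<and> generate G S = carrier G)"

definition right_action_by_auts ::
  "('a, 'm) monoid_scheme \<Rightarrow> ('b, 'n) monoid_scheme \<Rightarrow> ('a \<Rightarrow> 'b \<Rightarrow> 'b) \<Rightarrow> bool" where
  "right_action_by_auts G A act \<longleftrightarrow>
     (\<forall>g\<in>carrier G. act g \<in> iso A A) \<and>
     (\<forall>a\<in>carrier A. act \<one>\<^bsub>G\<^esub> a = a) \<and>
     (\<forall>g\<in>carrier G. \<forall>h\<in>carrier G. \<forall>a\<in>carrier A. act (g \<otimes>\<^bsub>G\<^esub> h) a = act h (act g a))"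

definition finite_action_image ::
  "('a, 'm) monoid_scheme \<Rightarrow> ('b, 'n) monoid_scheme \<Rightarrow> ('a \<Rightarrow> 'b \<Rightarrow> 'b) \<Rightarrow> bool" where
  "finite_action_image G A act \<longleftrightarrow> finite ((\<lambda>g. restrict (act g) (carrier A)) ` carrier G)"

definition two_cocycle ::
  "('a, 'm) monoid_scheme \<Rightarrow> ('b, 'n) monoid_scheme \<Rightarrow> ('a \<Rightarrow> 'b \<Rightarrow> 'b) \<Rightarrow> ('a \<Rightarrow> 'a \<Rightarrow> 'b) \<Rightarrow> bool" where
  "two_cocycle G A act \<sigma> \<longleftrightarrow>
     (\<forall>g\<in>carrier G. \<forall>h\<in>carrier G. \<sigma> g h \<in> carrier A) \<and>
     (\<forall>g\<in>carrier G. \<forall>h1\<in>carrier G. \<forall>h2\<in>carrier G.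
        \<sigma> g (h1 \<otimes>\<^bsub>G\<^esub> h2) =
          act h2 (\<sigma> g h1) \<otimes>\<^bsub>A\<^esub> \<sigma> (g \<otimes>\<^bsub>G\<^esub> h1) h2 \<otimes>\<^bsub>A\<^esub> inv\<^bsub>A\<^esub> (\<sigma> h1 h2))"

definition cohomologous ::
  "('a, 'm) monoid_scheme \<Rightarrow> ('b, 'n) monoid_scheme \<Rightarrow> ('a \<Rightarrow> 'b \<Rightarrow> 'b) \<Rightarrow> ('a \<Rightarrow> 'a \<Rightarrow> 'b) \<Rightarrow> ('a \<Rightarrow> 'a \<Rightarrow> 'b) \<Rightarrow> bool" where
  "cohomologous G A act \<sigma> \<tau> \<longleftrightarrow>
     (\<exists>f. f \<in> carrier G \<rightarrow> carrier A \<and>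
        (\<forall>g\<in>carrier G. \<forall>h\<in>carrier G.
           \<tau> g h = \<sigma> g h \<otimes>\<^bsub>A\<^esub> (act h (f g) \<otimes>\<^bsub>A\<^esub> f h \<otimes>\<^bsub>A\<^esub> inv\<^bsub>A\<^esub> (f (g \<otimes>\<^bsub>G\<^esub> h)))))"

definition left_weakly_bounded :: "('a, 'm) monoid_scheme \<Rightarrow> ('a \<Rightarrow> 'a \<Rightarrow> 'b) \<Rightarrow> bool" where
  "left_weakly_bounded G \<sigma> \<longleftrightarrow> (\<forall>g\<in>carrier G. finite ((\<lambda>h. \<sigma> g h) ` carrier G))"

definition right_weakly_bounded :: "('a, 'm) monoid_scheme \<Rightarrow> ('a \<Rightarrow> 'a \<Rightarrow> 'b) \<Rightarrow> bool" where
  "right_weakly_bounded G \<sigma> \<longleftrightarrow> (\<forall>g\<in>carrier G. finite ((\<lambda>h. \<sigma> h g) ` carrier G))"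

end

theory Submission
  imports Defs
begin

text \<open>
  Let \<open>E\<close> be the extension of \<open>G\<close> by \<open>A\<close> defined by \<open>\<sigma>\<close>; it is finitely generated.
  If every column \<open>\<sigma>(G, h)\<close> (or every row \<open>\<sigma>(h, G)\<close>) is finite, multiplying by a generator
  of \<open>E\<close> changes the \<open>A\<close>-component by a bounded amount, so \<open>A\<close> is undistorted in \<open>E\<close>: the
  norm \<open>\<nu>(a) = \<Sum>\<^sub>\<gamma> \<Sum>\<^sub>j |\<psi>\<^sub>j(\<gamma> a)|\<close>, built from integer coordinates \<open>\<psi>\<^sub>j\<close> of \<open>A\<close> and the
  finite image \<open>\<Gamma>\<close> of the action, satisfies \<open>\<nu>(a) \<le> K |(a, g)| + K\<^sub>1\<close> for the word length
  of \<open>E\<close>. Hence \<open>M\<^sub>j\<^sub>\<gamma>(g) = min\<^sub>a (K |(a, g)| - \<psi>\<^sub>j(\<gamma> a))\<close> exists, and subadditivity of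
  word length makes the defect \<open>\<delta>M\<^sub>j\<^sub>\<gamma> - \<psi>\<^sub>j \<circ> \<gamma> \<circ> \<sigma>\<close> nonnegative and bounded in terms
  of \<open>g\<close> alone as well as of \<open>h\<close> alone. Reassembling the \<open>M\<^sub>j\<^sub>\<gamma>\<close> into an \<open>A\<close>-valued
  cochain \<open>k\<close> gives \<open>\<delta>k = \<sigma>\<^sup>e \<cdot> (bounded defect)\<close> with \<open>e = N |\<Gamma>|\<close>. Dividing the
  exponents of \<open>k\<close> by \<open>e\<close> yields \<open>k = q\<^sup>e r\<close> with \<open>r\<close> in a finite set, so the cohomologous
  cocycle \<open>\<tau> = \<sigma> \<cdot> \<delta>(q\<^sup>-\<^sup>1)\<close> has \<open>\<tau>\<^sup>e\<close> in a finite set along every row and column;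
  as the torsion of \<open>A\<close> is finite, every element has only finitely many \<open>e\<close>-th roots.
\<close>

section \<open>Integer coordinates on finitely generated abelian groups\<close>

lemma (in comm_group) hom_finprod:
  assumes "comm_group H" and "h \<in> hom G H" and "f \<in> I \<rightarrow> carrier G"
  shows "h (finprod G f I) = finprod H (\<lambda>i. h (f i)) I"
proof -
  interpret H: comm_group H by fact
  interpret h: group_hom G H h
    by (simp add: group_hom_def group_hom_axioms_def is_group H.is_group assms(2))
  show ?thesis
    using assms(3)
  proof (induct I rule: infinite_finite_induct)
    case (insert i I)
    then show ?case by (auto simp: Pi_def)
  qed auto
qed

lemma (in comm_group) int_pow_hom: "(\<lambda>x. x [^] (k::int)) \<in> hom G G"
  by (rule homI) (auto simp: int_pow_distrib)

lemma (in comm_group) finprod_int_pow: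
  assumes "f \<in> I \<rightarrow> carrier G"
  shows "finprod G (\<lambda>i. f i [^] (k::int)) I = finprod G f I [^] k"
  using hom_finprod[OF comm_group_axioms int_pow_hom assms] by simp

lemma (in comm_group) finprod_int_pow_add:
  assumes "x \<in> I \<rightarrow> carrier G"
  shows "finprod G (\<lambda>i. x i [^] (a i + b i :: int)) I
       = finprod G (\<lambda>i. x i [^] a i) I \<otimes> finprod G (\<lambda>i. x i [^] b i) I"
proof -
  have "finprod G (\<lambda>i. x i [^] (a i + b i)) I = finprod G (\<lambda>i. x i [^] a i \<otimes> x i [^] b i) I"
    using assms by (intro finprod_cong') (auto simp: int_pow_mult Pi_def)
  also have "\<dots> = finprod G (\<lambda>i. x i [^] a i) I \<otimes> finprod G (\<lambda>i. x i [^] b i) I"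
    using assms by (intro finprod_multf) auto
  finally show ?thesis .
qed

lemma (in group) additive_int_pow:
  assumes H: "subgroup H G"
    and add: "\<And>x y. x \<in> H \<Longrightarrow> y \<in> H \<Longrightarrow> \<psi> (x \<otimes> y) = \<psi> x + (\<psi> y :: int)"
    and x: "x \<in> H"
  shows "\<psi> (x [^] (k::int)) = k * \<psi> x"
proof -
  have xc: "x \<in> carrier G" using subgroup.mem_carrier[OF H x] .
  have one: "\<psi> \<one> = 0" using add[OF subgroup.one_closed[OF H] subgroup.one_closed[OF H]] by simp
  have inv: "\<psi> (inv x) = - \<psi> x"
    using add[OF x subgroup.m_inv_closed[OF H x]] xc one by simp
  have pow: "x [^] i \<in> H" for i :: int by (rule subgroup_int_pow_closed[OF H x])
  show ?thesis
  proof (induct k rule: int_induct[where k = 0])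
    case base
    then show ?case using one by simp
  next
    case (step1 i)
    have "x [^] (i + 1) = x [^] i \<otimes> x" using xc by (simp add: int_pow_mult)
    then show ?case using step1 add[OF pow x] by (simp add: algebra_simps)
  next
    case (step2 i)
    have "x [^] (i - 1) = x [^] i \<otimes> inv x" using xc by (simp add: int_pow_diff)
    then show ?case
      using step2 add[OF pow subgroup.m_inv_closed[OF H x]] inv by (simp add: algebra_simps)
  qed
qed

lemma (in group) int_pow_diff_eq:
  assumes "b \<in> carrier G" "b' \<in> carrier G" "s \<in> carrier G"
    and "b \<otimes> s [^] (i::int) = b' \<otimes> s [^] (i'::int)"
  shows "s [^] (i - i') = inv b \<otimes> b'"
proof -
  have "s [^] i = inv b \<otimes> (b' \<otimes> s [^] i')"
    using assms inv_solve_left[of "s [^] i" b "b' \<otimes> s [^] i'"] by simp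
  then show ?thesis using assms by (simp add: int_pow_diff m_assoc)
qed

lemma (in group) pos_pow_mem_if_int_pow_mem:
  assumes H: "subgroup H G" and s: "s \<in> carrier G"
    and "s [^] (j::int) \<in> H" and "j \<noteq> 0"
  shows "\<exists>n::nat. n > 0 \<and> s [^] n \<in> H"
proof (cases "j \<ge> 0")
  case True
  then have "s [^] nat j = s [^] j" by (metis int_nat_eq int_pow_int)
  then show ?thesis using assms True by (intro exI[of _ "nat j"]) auto
next
  case False
  then have "s [^] nat (- j) = inv (s [^] j)" using s by (simp add: int_pow_neg flip: int_pow_int)
  then show ?thesis
    using subgroup.m_inv_closed[OF H assms(3)] False by (intro exI[of _ "nat (- j)"]) auto
qed

lemma (in comm_group) mult_int_pow_mult:
  assumes "b \<in> carrier G" "c \<in> carrier G" "s \<in> carrier G"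
  shows "(b \<otimes> s [^] (i::int)) \<otimes> (c \<otimes> s [^] (k::int)) = (b \<otimes> c) \<otimes> s [^] (i + k)"
  using assms by (simp add: int_pow_mult m_ac)

lemma (in comm_group) subgroup_mult_int_pows:
  assumes H: "subgroup H G" and s: "s \<in> carrier G"
  shows "subgroup {b \<otimes> s [^] (j::int) | b j. b \<in> H} G" (is "subgroup ?R G")
proof (rule subgroupI)
  show "?R \<subseteq> carrier G" using subgroup.subset[OF H] s by auto
  have "\<one> = \<one> \<otimes> s [^] (0::int)" by simp
  then show "?R \<noteq> {}" using subgroup.one_closed[OF H] by blast
next
  fix a assume "a \<in> ?R"
  then obtain b j where b: "b \<in> H" and a: "a = b \<otimes> s [^] (j::int)" by blast
  have "inv a = inv b \<otimes> s [^] (-j)"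
    using a subgroup.mem_carrier[OF H b] s by (simp add: inv_mult int_pow_neg m_comm)
  then show "inv a \<in> ?R" using subgroup.m_inv_closed[OF H b] by blast
next
  fix a c assume "a \<in> ?R" "c \<in> ?R"
  then obtain b j b' j' where b: "b \<in> H" "b' \<in> H"
    and ac: "a = b \<otimes> s [^] (j::int)" "c = b' \<otimes> s [^] (j'::int)" by blast
  have "a \<otimes> c = (b \<otimes> b') \<otimes> s [^] (j + j')"
    using ac subgroup.mem_carrier[OF H] b s by (auto intro: mult_int_pow_mult)
  then show "a \<otimes> c \<in> ?R" using subgroup.m_closed[OF H b] by blast
qed

lemma (in comm_group) generate_insert_eq:
  assumes S: "S \<subseteq> carrier G" and s: "s \<in> carrier G"
  shows "generate G (insert s S) = {b \<otimes> s [^] (j::int) | b j. b \<in> generate G S}"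
    (is "_ = ?R")
proof
  have sub: "subgroup (generate G S) G" using generate_is_subgroup[OF S] .
  have "insert s S \<subseteq> ?R"
  proof
    fix x assume "x \<in> insert s S"
    then show "x \<in> ?R"
    proof
      assume "x = s"
      then have "x = \<one> \<otimes> s [^] (1::int)" using s by simp
      then show ?thesis using subgroup.one_closed[OF sub] by blast
    next
      assume "x \<in> S"
      then have "x = x \<otimes> s [^] (0::int)" using S by auto
      then show ?thesis using \<open>x \<in> S\<close> generate.incl[of x S G] by blast
    qed
  qed
  then show "generate G (insert s S) \<subseteq> ?R"
    using generate_subgroup_incl subgroup_mult_int_pows[OF sub s] by blast
next
  have sub': "subgroup (generate G (insert s S)) G" using generate_is_subgroup S s by auto
  have "generate G S \<subseteq> generate G (insert s S)" by (rule mono_generate) auto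
  moreover have "s [^] j \<in> generate G (insert s S)" for j :: int
    using subgroup_int_pow_closed[OF sub'] generate.incl[of s "insert s S" G] by blast
  ultimately show "?R \<subseteq> generate G (insert s S)" using subgroup.m_closed[OF sub'] by blast
qed

definition torsion :: "('b, 'n) monoid_scheme \<Rightarrow> 'b set \<Rightarrow> 'b set" where
  "torsion G H = {x \<in> H. \<exists>n::nat. n > 0 \<and> x [^]\<^bsub>G\<^esub> n = \<one>\<^bsub>G\<^esub>}"

lemma (in comm_group) finite_roots_if_finite_torsion:
  assumes H: "subgroup H G" and fin: "finite (torsion G H)" and n: "n > 0"
  shows "finite {b \<in> H. b [^] (n::nat) = c}"
proof (cases "{b \<in> H. b [^] n = c} = {}")
  case False
  then obtain b0 where b0: "b0 \<in> H" "b0 [^] n = c" by blast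
  have "{b \<in> H. b [^] n = c} \<subseteq> (\<lambda>u. b0 \<otimes> u) ` torsion G H"
  proof
    fix b assume b: "b \<in> {b \<in> H. b [^] n = c}"
    have bc: "b0 \<in> carrier G" "b \<in> carrier G" "c \<in> carrier G"
      using b0 b subgroup.mem_carrier[OF H] by auto
    have "(inv b0 \<otimes> b) [^] n = \<one>"
      using b0 b bc by (simp add: nat_pow_distrib nat_pow_inv)
    moreover have "inv b0 \<otimes> b \<in> H"
      using b b0 subgroup.m_closed[OF H subgroup.m_inv_closed[OF H]] by blast
    ultimately have "inv b0 \<otimes> b \<in> torsion G H" unfolding torsion_def using n by blast
    moreover have "b = b0 \<otimes> (inv b0 \<otimes> b)" using bc by (simp add: m_assoc[symmetric])
    ultimately show "b \<in> (\<lambda>u. b0 \<otimes> u) ` torsion G H" by blast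
  qed
  then show ?thesis using fin finite_subset by blast
qed (simp only: finite.emptyI)

lemma (in comm_group) torsion_generate_insert_free:
  assumes S: "S \<subseteq> carrier G" and s: "s \<in> carrier G"
    and free: "\<And>j::int. s [^] j \<in> generate G S \<Longrightarrow> j = 0"
  shows "torsion G (generate G (insert s S)) \<subseteq> torsion G (generate G S)"
proof
  let ?H = "generate G S"
  have sub: "subgroup ?H G" using generate_is_subgroup[OF S] .
  fix x assume "x \<in> torsion G (generate G (insert s S))"
  then obtain n :: nat where x: "x \<in> generate G (insert s S)" and n: "n > 0" and xn: "x [^] n = \<one>"
    unfolding torsion_def by blast
  obtain b i where b: "b \<in> ?H" and xb: "x = b \<otimes> s [^] (i::int)"
    using x generate_insert_eq[OF S s] by blast
  have bc: "b \<in> carrier G" using b subgroup.mem_carrier[OF sub] by blast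
  have "\<one> = b [^] int n \<otimes> s [^] (i * int n)"
    using xn bc s unfolding xb by (simp add: int_pow_distrib int_pow_pow flip: int_pow_int)
  then have "s [^] (i * int n) = inv (b [^] int n)"
    using bc s by (metis inv_equality int_pow_closed m_comm)
  then have "s [^] (i * int n) \<in> ?H"
    using subgroup.m_inv_closed[OF sub subgroup_int_pow_closed[OF sub b]] by simp
  then have "i = 0" using free n by fastforce
  then show "x \<in> torsion G ?H" using b bc n xn unfolding xb torsion_def by auto
qed

lemma (in group) subgroup_nat_pow_closed:
  assumes "subgroup H G" "h \<in> H" shows "h [^] (n::nat) \<in> H"
  using subgroup_int_pow_closed[OF assms, of "int n"] by (simp add: int_pow_int)

lemma (in comm_group) generate_insert_reduced:
  assumes S: "S \<subseteq> carrier G" and s: "s \<in> carrier G"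
    and sn: "s [^] n \<in> generate G S" and n: "n > (0::nat)"
    and x: "x \<in> generate G (insert s S)"
  obtains b r where "b \<in> generate G S" "r < n" "x = b \<otimes> s [^] r"
proof -
  let ?H = "generate G S"
  have sub: "subgroup ?H G" using generate_is_subgroup[OF S] .
  obtain b i where b: "b \<in> ?H" and xb: "x = b \<otimes> s [^] (i::int)"
    using x generate_insert_eq[OF S s] by blast
  define r where "r = nat (i mod int n)"
  define b1 where "b1 = b \<otimes> (s [^] n) [^] (i div int n)"
  have b1: "b1 \<in> ?H"
    unfolding b1_def using subgroup.m_closed[OF sub b subgroup_int_pow_closed[OF sub sn]] .
  have "i = int n * (i div int n) + int r" unfolding r_def using n by simp
  then have "s [^] i = (s [^] n) [^] (i div int n) \<otimes> s [^] r"
    using s by (metis int_pow_int int_pow_mult int_pow_pow)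
  then have "x = b1 \<otimes> s [^] r"
    unfolding xb b1_def using subgroup.mem_carrier[OF sub b] s by (simp add: m_assoc)
  moreover have "r < n" unfolding r_def using n by (simp add: nat_less_iff)
  ultimately show thesis using that b1 by blast
qed

lemma (in comm_group) finite_torsion_generate_insert:
  assumes S: "S \<subseteq> carrier G" and s: "s \<in> carrier G"
    and sn: "s [^] n \<in> generate G S" and n: "n > (0::nat)"
    and fin: "finite (torsion G (generate G S))"
  shows "finite (torsion G (generate G (insert s S)))"
proof -
  let ?H = "generate G S"
  have sub: "subgroup ?H G" using generate_is_subgroup[OF S] .
  define B where
    "B = (\<Union>t\<in>torsion G ?H. \<Union>r<n. {b \<in> ?H. b [^] n = t \<otimes> inv ((s [^] n) [^] r)} \<times> {r})"
  have "finite B"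
    unfolding B_def using finite_roots_if_finite_torsion[OF sub fin n] fin by blast
  moreover have "torsion G (generate G (insert s S)) \<subseteq> (\<lambda>(b, r). b \<otimes> s [^] r) ` B"
  proof
    fix x assume "x \<in> torsion G (generate G (insert s S))"
    then obtain k :: nat where x: "x \<in> generate G (insert s S)" and k: "k > 0" and xk: "x [^] k = \<one>"
      unfolding torsion_def by blast
    obtain b r where b: "b \<in> ?H" and r: "r < n" and xb: "x = b \<otimes> s [^] r"
      using generate_insert_reduced[OF S s sn n x] .
    have c: "b \<in> carrier G" using subgroup.mem_carrier[OF sub b] .
    have x_pow: "x [^] n = b [^] n \<otimes> (s [^] n) [^] r"
      unfolding xb using c s by (simp add: nat_pow_distrib nat_pow_pow mult.commute)
    have "x [^] n \<in> ?H"
      unfolding x_pow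
      using subgroup.m_closed[OF sub subgroup_nat_pow_closed[OF sub b] subgroup_nat_pow_closed[OF sub sn]] .
    moreover have "(x [^] n) [^] k = \<one>"
      using xk c s xb by (metis mult.commute nat_pow_one nat_pow_pow m_closed nat_pow_closed)
    ultimately have "x [^] n \<in> torsion G ?H" unfolding torsion_def using k by blast
    moreover have "b [^] n = x [^] n \<otimes> inv ((s [^] n) [^] r)" using x_pow c s by (simp add: m_assoc)
    ultimately have "(b, r) \<in> B" unfolding B_def using b r by blast
    then show "x \<in> (\<lambda>(b, r). b \<otimes> s [^] r) ` B" using xb by force
  qed
  ultimately show ?thesis using finite_surj by blast
qed

lemma (in comm_group) finite_torsion_generate:
  assumes "finite S" "S \<subseteq> carrier G"
  shows "finite (torsion G (generate G S))"
  using assms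
proof (induct S rule: finite_induct)
  case empty
  have "torsion G {\<one>} = {\<one>}" unfolding torsion_def by (auto intro: exI[of _ 1])
  then show ?case by (simp add: generate_empty)
next
  case (insert s S)
  then have S: "S \<subseteq> carrier G" and s: "s \<in> carrier G" by auto
  show ?case
  proof (cases "\<forall>j::int. s [^] j \<in> generate G S \<longrightarrow> j = 0")
    case True
    then show ?thesis using torsion_generate_insert_free[OF S s] insert finite_subset by blast
  next
    case False
    then obtain n where "s [^] n \<in> generate G S" "n > (0::nat)"
      using pos_pow_mem_if_int_pow_mem[OF generate_is_subgroup[OF S] s] by blast
    then show ?thesis using finite_torsion_generate_insert[OF S s] insert by blast
  qed
qed

text \<open>A weak form of the structure theorem for finitely generated abelian groups, which is all
  the argument needs.\<close>

definition int_coordinates ::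
  "('b, 'n) monoid_scheme \<Rightarrow> 'b set \<Rightarrow> nat \<Rightarrow> nat \<Rightarrow> (nat \<Rightarrow> 'b \<Rightarrow> int) \<Rightarrow> (nat \<Rightarrow> 'b) \<Rightarrow> bool"
  where
  "int_coordinates G H N m \<psi> w \<longleftrightarrow> N > 0 \<and>
     (\<forall>j<m. \<forall>x\<in>H. \<forall>y\<in>H. \<psi> j (x \<otimes>\<^bsub>G\<^esub> y) = \<psi> j x + \<psi> j y) \<and>
     (\<forall>j<m. w j \<in> H) \<and>
     (\<forall>a\<in>H. finprod G (\<lambda>j. w j [^]\<^bsub>G\<^esub> \<psi> j a) {..<m} = a [^]\<^bsub>G\<^esub> N)"

lemma (in comm_group) additive_extension_generate_insert:
  assumes S: "S \<subseteq> carrier G" and s: "s \<in> carrier G"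
    and add: "\<And>j b b' i i'. j \<in> J \<Longrightarrow> b \<in> generate G S \<Longrightarrow> b' \<in> generate G S \<Longrightarrow>
        F j (b \<otimes> b') (i + i') = F j b i + F j b' i'"
    and wd: "\<And>j b b' i i'. j \<in> J \<Longrightarrow> b \<in> generate G S \<Longrightarrow> b' \<in> generate G S \<Longrightarrow>
        b \<otimes> s [^] i = b' \<otimes> s [^] i' \<Longrightarrow> F j b i = F j b' (i'::int)"
  shows "\<exists>\<psi>. (\<forall>j\<in>J. \<forall>x\<in>generate G (insert s S). \<forall>y\<in>generate G (insert s S).
        \<psi> j (x \<otimes> y) = \<psi> j x + (\<psi> j y :: int))
      \<and> (\<forall>j\<in>J. \<forall>b\<in>generate G S. \<forall>i. \<psi> j (b \<otimes> s [^] i) = F j b i)"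
proof -
  let ?H = "generate G S"
  have Hc: "?H \<subseteq> carrier G" using generate_incl[OF S] .
  define dec where "dec x = (SOME p. fst p \<in> ?H \<and> x = fst p \<otimes> s [^] (snd p :: int))" for x
  define \<psi> where "\<psi> j x = F j (fst (dec x)) (snd (dec x))" for j x
  have eval: "\<psi> j (b \<otimes> s [^] i) = F j b i" if "j \<in> J" "b \<in> ?H" for j b i
  proof -
    have "\<exists>p. fst p \<in> ?H \<and> b \<otimes> s [^] i = fst p \<otimes> s [^] (snd p :: int)" using that by force
    then have "fst (dec (b \<otimes> s [^] i)) \<in> ?H
        \<and> b \<otimes> s [^] i = fst (dec (b \<otimes> s [^] i)) \<otimes> s [^] snd (dec (b \<otimes> s [^] i))"
      unfolding dec_def by (rule someI_ex)
    then show ?thesis unfolding \<psi>_def using wd[OF that(1,2)] by metis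
  qed
  have "\<psi> j (x \<otimes> y) = \<psi> j x + \<psi> j y"
    if j: "j \<in> J" and xy: "x \<in> generate G (insert s S)" "y \<in> generate G (insert s S)" for j x y
  proof -
    obtain b i c k where bc: "b \<in> ?H" "c \<in> ?H" and xy: "x = b \<otimes> s [^] (i::int)" "y = c \<otimes> s [^] (k::int)"
      using xy generate_insert_eq[OF S s] by blast
    have "x \<otimes> y = (b \<otimes> c) \<otimes> s [^] (i + k)" using xy bc Hc s by (auto intro: mult_int_pow_mult)
    moreover have "b \<otimes> c \<in> ?H" using subgroup.m_closed[OF generate_is_subgroup[OF S] bc] .
    ultimately show ?thesis using eval add j bc xy by simp
  qed
  then show ?thesis using eval by blast
qed

lemma (in comm_group) generate_insert_free_unique:
  assumes S: "S \<subseteq> carrier G" and s: "s \<in> carrier G"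
    and free: "\<And>j::int. s [^] j \<in> generate G S \<Longrightarrow> j = 0"
    and eq: "b \<otimes> s [^] i = b' \<otimes> s [^] (i'::int)"
    and b: "b \<in> generate G S" "b' \<in> generate G S"
  shows "b = b' \<and> i = i'"
proof -
  have sub: "subgroup (generate G S) G" using generate_is_subgroup[OF S] .
  have c: "b \<in> carrier G" "b' \<in> carrier G" using b subgroup.mem_carrier[OF sub] by auto
  have "s [^] (i - i') \<in> generate G S"
    using int_pow_diff_eq[OF c s eq] subgroup.m_closed[OF sub subgroup.m_inv_closed[OF sub b(1)] b(2)]
    by simp
  then have "i = i'" using free by fastforce
  then show ?thesis using eq c s by simp
qed

lemma (in comm_group) int_coordinates_insert_free:
  assumes S: "S \<subseteq> carrier G" and s: "s \<in> carrier G"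
    and free: "\<And>j::int. s [^] j \<in> generate G S \<Longrightarrow> j = 0"
    and coords: "int_coordinates G (generate G S) N m \<psi> w"
  shows "\<exists>\<psi>' w'. int_coordinates G (generate G (insert s S)) N (Suc m) \<psi>' w'"
proof -
  let ?H = "generate G S" and ?H' = "generate G (insert s S)"
  have Hc: "?H \<subseteq> carrier G" using generate_incl[OF S] .
  from coords have N: "N > 0" and add: "\<forall>j<m. \<forall>x\<in>?H. \<forall>y\<in>?H. \<psi> j (x \<otimes> y) = \<psi> j x + \<psi> j y"
    and wH: "\<forall>j<m. w j \<in> ?H" and prod: "\<forall>a\<in>?H. finprod G (\<lambda>j. w j [^] \<psi> j a) {..<m} = a [^] N"
    unfolding int_coordinates_def by auto
  have F_add: "(if j < m then \<psi> j (b \<otimes> b') else i + i') = (if j < m then \<psi> j b else i) + (if j < m then \<psi> j b' else i')"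
    if "j \<in> {..<Suc m}" "b \<in> ?H" "b' \<in> ?H" for j b b' i i'
    using add that by auto
  have F_wd: "(if j < m then \<psi> j b else i) = (if j < m then \<psi> j b' else i')"
    if "j \<in> {..<Suc m}" "b \<in> ?H" "b' \<in> ?H" "b \<otimes> s [^] i = b' \<otimes> s [^] (i'::int)" for j b b' i i'
    using generate_insert_free_unique[OF S s free that(4,2,3)] by simp
  obtain \<psi>' where add': "\<forall>j\<in>{..<Suc m}. \<forall>x\<in>?H'. \<forall>y\<in>?H'.
        \<psi>' j (x \<otimes> y) = \<psi>' j x + \<psi>' j y"
    and eval: "\<forall>j\<in>{..<Suc m}. \<forall>b\<in>?H. \<forall>i.
        \<psi>' j (b \<otimes> s [^] i) = (if j < m then \<psi> j b else i)"
    using additive_extension_generate_insert[OF S s,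
        of "{..<Suc m}" "\<lambda>j b i. if j < m then \<psi> j b else i", OF F_add F_wd] by blast
  define w' where "w' = w(m := s [^] N)"
  have "int_coordinates G ?H' N (Suc m) \<psi>' w'"
    unfolding int_coordinates_def
  proof (intro conjI allI impI ballI)
    show "N > 0" by (rule N)
  next
    fix j x y assume "j < Suc m" "x \<in> ?H'" "y \<in> ?H'"
    then show "\<psi>' j (x \<otimes> y) = \<psi>' j x + \<psi>' j y" using add' by blast
  next
    fix j assume "j < Suc m"
    have "?H \<subseteq> ?H'" by (rule mono_generate) auto
    moreover have "s [^] N \<in> ?H'"
      using subgroup_nat_pow_closed[OF generate_is_subgroup generate.incl[of s "insert s S"]] S s by auto
    ultimately show "w' j \<in> ?H'" using wH \<open>j < Suc m\<close> unfolding w'_def by (auto simp: less_Suc_eq)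
  next
    fix a assume "a \<in> ?H'"
    then obtain b i where b: "b \<in> ?H" and ab: "a = b \<otimes> s [^] (i::int)"
      using generate_insert_eq[OF S s] by blast
    have bc: "b \<in> carrier G" using b Hc by auto
    have wc: "w \<in> {..<m} \<rightarrow> carrier G" using wH Hc by auto
    have "finprod G (\<lambda>j. w' j [^] \<psi>' j a) {..<Suc m}
        = w' m [^] \<psi>' m a \<otimes> finprod G (\<lambda>j. w' j [^] \<psi>' j a) {..<m}"
      using wc s unfolding lessThan_Suc w'_def by (subst finprod_insert) (auto simp: Pi_def)
    also have "finprod G (\<lambda>j. w' j [^] \<psi>' j a) {..<m} = finprod G (\<lambda>j. w j [^] \<psi> j b) {..<m}"
      using wc by (intro finprod_cong') (auto simp: w'_def ab eval[rule_format, OF _ b] Pi_def)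
    also have "\<dots> = b [^] N" using prod b by auto
    also have "w' m [^] \<psi>' m a = (s [^] i) [^] N"
      unfolding w'_def ab using eval[rule_format, OF _ b, of m] s by (simp add: int_pow_pow mult.commute flip: int_pow_int)
    also have "(s [^] i) [^] N \<otimes> b [^] N = a [^] N"
      unfolding ab using bc s by (simp add: nat_pow_distrib m_comm)
    finally show "finprod G (\<lambda>j. w' j [^] \<psi>' j a) {..<Suc m} = a [^] N" .
  qed
  then show ?thesis by blast
qed

lemma (in comm_group) finprod_int_pow_mult:
  assumes "w \<in> I \<rightarrow> carrier G"
  shows "finprod G (\<lambda>j. w j [^] (k * x j)) I = finprod G (\<lambda>j. w j [^] x j) I [^] (k::int)"
proof -
  have "finprod G (\<lambda>j. w j [^] (k * x j)) I = finprod G (\<lambda>j. (w j [^] x j) [^] k) I"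
    using assms by (intro finprod_cong') (auto simp: int_pow_pow mult.commute Pi_def)
  also have "\<dots> = finprod G (\<lambda>j. w j [^] x j) I [^] k"
    using assms by (intro finprod_int_pow) (auto simp: Pi_def)
  finally show ?thesis .
qed

lemma (in comm_group) additive_extension_well_defined:
  assumes H: "subgroup H G" and s: "s \<in> carrier G" and sn: "s [^] n \<in> H"
    and add: "\<And>x y. x \<in> H \<Longrightarrow> y \<in> H \<Longrightarrow> \<psi> (x \<otimes> y) = \<psi> x + (\<psi> y :: int)"
    and b: "b \<in> H" "b' \<in> H" and eq: "b \<otimes> s [^] i = b' \<otimes> s [^] (i'::int)"
  shows "int n * \<psi> b + i * \<psi> (s [^] n) = int n * \<psi> b' + i' * \<psi> (s [^] n)"
proof -
  have c: "b \<in> carrier G" "b' \<in> carrier G" using b subgroup.mem_carrier[OF H] by auto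
  have pow: "\<psi> (x [^] (k::int)) = k * \<psi> x" if "x \<in> H" for x k
    using additive_int_pow[OF H add that] .
  define d where "d = s [^] (i - i')"
  have d: "d = inv b \<otimes> b'" unfolding d_def by (rule int_pow_diff_eq[OF c s eq])
  have dH: "d \<in> H" unfolding d using subgroup.m_closed[OF H subgroup.m_inv_closed[OF H b(1)] b(2)] .
  have "\<psi> d = \<psi> b' - \<psi> b"
    using add subgroup.m_inv_closed[OF H b(1)] b pow[OF b(1), of "-1"] c unfolding d by (simp add: int_pow_neg)
  then have "int n * \<psi> d = int n * \<psi> b' - int n * \<psi> b" by (simp add: right_diff_distrib)
  moreover have "d [^] int n = (s [^] n) [^] (i - i')"
    unfolding d_def using s by (simp add: int_pow_pow mult.commute flip: int_pow_int)
  then have "int n * \<psi> d = (i - i') * \<psi> (s [^] n)" using pow[OF dH, of "int n"] pow[OF sn, of "i - i'"] by simp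
  then have "int n * \<psi> d = i * \<psi> (s [^] n) - i' * \<psi> (s [^] n)" by (simp add: left_diff_distrib)
  ultimately show ?thesis by linarith
qed

lemma (in comm_group) pow_pow_mult_int_pow:
  assumes b: "b \<in> carrier G" and s: "s \<in> carrier G"
  shows "(b [^] N) [^] int n \<otimes> ((s [^] n) [^] N) [^] (i::int) = (b \<otimes> s [^] i) [^] (N * n)"
proof -
  have "(b [^] N) [^] int n = b [^] int (N * n)"
    using b by (simp add: int_pow_pow flip: int_pow_int)
  moreover have "((s [^] n) [^] N) [^] i = (s [^] i) [^] int (N * n)"
    using s by (simp add: int_pow_pow mult_ac flip: int_pow_int)
  ultimately show ?thesis using b s by (metis int_pow_distrib int_pow_int int_pow_closed)
qed

lemma (in comm_group) int_coordinates_insert_dependent: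
  assumes S: "S \<subseteq> carrier G" and s: "s \<in> carrier G"
    and sn: "s [^] n \<in> generate G S" and n: "n > (0::nat)"
    and coords: "int_coordinates G (generate G S) N m \<psi> w"
  shows "\<exists>\<psi>'. int_coordinates G (generate G (insert s S)) (N * n) m \<psi>' w"
proof -
  let ?H = "generate G S" and ?H' = "generate G (insert s S)"
  have sub: "subgroup ?H G" using generate_is_subgroup[OF S] .
  from coords have N: "N > 0" and add: "\<forall>j<m. \<forall>x\<in>?H. \<forall>y\<in>?H. \<psi> j (x \<otimes> y) = \<psi> j x + \<psi> j y"
    and wH: "\<forall>j<m. w j \<in> ?H" and prod: "\<forall>a\<in>?H. finprod G (\<lambda>j. w j [^] \<psi> j a) {..<m} = a [^] N"
    unfolding int_coordinates_def by auto
  have F_add: "int n * \<psi> j (b \<otimes> b') + (i + i') * \<psi> j (s [^] n)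
      = (int n * \<psi> j b + i * \<psi> j (s [^] n)) + (int n * \<psi> j b' + i' * \<psi> j (s [^] n))"
    if "j \<in> {..<m}" "b \<in> ?H" "b' \<in> ?H" for j b b' i i'
    using add that by (simp add: distrib_left distrib_right)
  have F_wd: "int n * \<psi> j b + i * \<psi> j (s [^] n) = int n * \<psi> j b' + i' * \<psi> j (s [^] n)"
    if "j \<in> {..<m}" "b \<in> ?H" "b' \<in> ?H" "b \<otimes> s [^] i = b' \<otimes> s [^] (i'::int)" for j b b' i i'
    using additive_extension_well_defined[OF sub s sn _ that(2-4)] add that(1) by simp
  obtain \<psi>' where add': "\<forall>j\<in>{..<m}. \<forall>x\<in>?H'. \<forall>y\<in>?H'.
        \<psi>' j (x \<otimes> y) = \<psi>' j x + \<psi>' j y"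
    and eval: "\<forall>j\<in>{..<m}. \<forall>b\<in>?H. \<forall>i.
        \<psi>' j (b \<otimes> s [^] i) = int n * \<psi> j b + i * \<psi> j (s [^] n)"
    using additive_extension_generate_insert[OF S s,
        of "{..<m}" "\<lambda>j b i. int n * \<psi> j b + i * \<psi> j (s [^] n)", OF F_add F_wd] by blast
  have "int_coordinates G ?H' (N * n) m \<psi>' w"
    unfolding int_coordinates_def
  proof (intro conjI allI impI ballI)
    show "N * n > 0" using N n by simp
  next
    fix j x y assume "j < m" "x \<in> ?H'" "y \<in> ?H'"
    then show "\<psi>' j (x \<otimes> y) = \<psi>' j x + \<psi>' j y" using add' by blast
  next
    fix j assume "j < m"
    then show "w j \<in> ?H'" using wH mono_generate[of S "insert s S"] by blast
  next
    fix a assume "a \<in> ?H'"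
    then obtain b i where b: "b \<in> ?H" and ab: "a = b \<otimes> s [^] (i::int)"
      using generate_insert_eq[OF S s] by blast
    have bc: "b \<in> carrier G" using subgroup.mem_carrier[OF sub b] .
    have wc: "w \<in> {..<m} \<rightarrow> carrier G" using wH subgroup.mem_carrier[OF sub] by auto
    have "finprod G (\<lambda>j. w j [^] \<psi>' j a) {..<m}
        = finprod G (\<lambda>j. w j [^] (int n * \<psi> j b + i * \<psi> j (s [^] n))) {..<m}"
      using wc by (intro finprod_cong') (auto simp: ab eval[rule_format, OF _ b] Pi_def)
    also have "\<dots> = (b [^] N) [^] int n \<otimes> ((s [^] n) [^] N) [^] i"
      using finprod_int_pow_add[OF wc] finprod_int_pow_mult[OF wc] prod b sn by simp
    also have "\<dots> = a [^] (N * n)" unfolding ab using bc s by (rule pow_pow_mult_int_pow)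
    finally show "finprod G (\<lambda>j. w j [^] \<psi>' j a) {..<m} = a [^] (N * n)" .
  qed
  then show ?thesis by blast
qed

lemma (in comm_group) int_coordinates_generate:
  assumes "finite S" "S \<subseteq> carrier G"
  shows "\<exists>N m \<psi> w. int_coordinates G (generate G S) N m \<psi> w"
  using assms
proof (induct S rule: finite_induct)
  case empty
  have "int_coordinates G (generate G {}) 1 0 (\<lambda>_ _. 0) (\<lambda>_. \<one>)"
    unfolding int_coordinates_def generate_empty by auto
  then show ?case by blast
next
  case (insert s S)
  then have S: "S \<subseteq> carrier G" and s: "s \<in> carrier G" by auto
  from insert obtain N m \<psi> w where coords: "int_coordinates G (generate G S) N m \<psi> w" by blast
  show ?case
  proof (cases "\<forall>j::int. s [^] j \<in> generate G S \<longrightarrow> j = 0")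
    case True
    then show ?thesis using int_coordinates_insert_free[OF S s _ coords] by blast
  next
    case False
    then obtain n where "s [^] n \<in> generate G S" "n > (0::nat)"
      using pos_pow_mem_if_int_pow_mem[OF generate_is_subgroup[OF S] s] by blast
    then show ?thesis using int_coordinates_insert_dependent[OF S s _ _ coords] by blast
  qed
qed

section \<open>Word length\<close>

definition (in monoid) word_prod :: "'a list \<Rightarrow> 'a" where
  "word_prod ws = foldr (\<otimes>) ws \<one>"

definition (in group) word_length :: "'a set \<Rightarrow> 'a \<Rightarrow> nat" where
  "word_length S x =
     (LEAST n. \<exists>ws. set ws \<subseteq> S \<union> m_inv G ` S \<and> length ws = n \<and> word_prod ws = x)"

lemma (in monoid) word_prod_closed: "set ws \<subseteq> carrier G \<Longrightarrow> word_prod ws \<in> carrier G"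
  by (induct ws) (auto simp: word_prod_def)

lemma (in monoid) word_prod_append:
  "set xs \<subseteq> carrier G \<Longrightarrow> set ys \<subseteq> carrier G \<Longrightarrow> word_prod (xs @ ys) = word_prod xs \<otimes> word_prod ys"
  by (induct xs) (auto simp: word_prod_def m_assoc word_prod_closed[unfolded word_prod_def])

lemma (in monoid) word_prod_snoc:
  "set xs \<subseteq> carrier G \<Longrightarrow> x \<in> carrier G \<Longrightarrow> word_prod (xs @ [x]) = word_prod xs \<otimes> x"
  using word_prod_append[of xs "[x]"] by (simp add: word_prod_def)

lemma (in group) word_prod_generate:
  assumes "S \<subseteq> carrier G" and "x \<in> generate G S"
  shows "\<exists>ws. set ws \<subseteq> S \<union> m_inv G ` S \<and> word_prod ws = x"
  using assms(2)
proof (induct rule: generate.induct)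
  case one
  then show ?case by (intro exI[of _ "[]"]) (simp add: word_prod_def)
next
  case (incl h)
  then show ?case using assms(1) by (intro exI[of _ "[h]"]) (auto simp: word_prod_def)
next
  case (inv h)
  then show ?case using assms(1) by (intro exI[of _ "[inv h]"]) (auto simp: word_prod_def)
next
  case (eng h1 h2)
  then obtain ws1 ws2 where ws: "set ws1 \<subseteq> S \<union> m_inv G ` S" "word_prod ws1 = h1"
    "set ws2 \<subseteq> S \<union> m_inv G ` S" "word_prod ws2 = h2" by blast
  moreover have "set ws1 \<subseteq> carrier G" "set ws2 \<subseteq> carrier G" using ws assms(1) by auto
  ultimately show ?case by (intro exI[of _ "ws1 @ ws2"]) (auto simp: word_prod_append)
qed

lemma (in group) word_length_word:
  assumes "S \<subseteq> carrier G" and "x \<in> generate G S"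
  obtains ws where "set ws \<subseteq> S \<union> m_inv G ` S" "length ws = word_length S x" "word_prod ws = x"
proof -
  have "\<exists>n ws. set ws \<subseteq> S \<union> m_inv G ` S \<and> length ws = n \<and> word_prod ws = x"
    using word_prod_generate[OF assms] by blast
  then have "\<exists>ws. set ws \<subseteq> S \<union> m_inv G ` S \<and> length ws = word_length S x \<and> word_prod ws = x"
    unfolding word_length_def by (rule LeastI_ex)
  then show thesis using that by blast
qed

lemma (in group) word_length_le:
  "set ws \<subseteq> S \<union> m_inv G ` S \<Longrightarrow> word_length S (word_prod ws) \<le> length ws"
  unfolding word_length_def by (rule Least_le) blast

lemma (in group) word_length_mult:
  assumes S: "S \<subseteq> carrier G" "generate G S = carrier G"
    and "x \<in> carrier G" "y \<in> carrier G"
  shows "word_length S (x \<otimes> y) \<le> word_length S x + word_length S y"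
proof -
  have SS: "S \<union> m_inv G ` S \<subseteq> carrier G" using S by auto
  obtain xs ys where "set xs \<subseteq> S \<union> m_inv G ` S" "length xs = word_length S x" "word_prod xs = x"
    and "set ys \<subseteq> S \<union> m_inv G ` S" "length ys = word_length S y" "word_prod ys = y"
    using word_length_word[OF S(1)] assms(3,4) S(2) by metis
  then show ?thesis
    using word_length_le[of "xs @ ys" S] word_prod_append[of xs ys] SS by auto
qed

lemma (in group) word_length_cancel_left:
  assumes S: "S \<subseteq> carrier G" "generate G S = carrier G"
    and x: "x \<in> carrier G" and y: "y \<in> carrier G"
  shows "word_length S y \<le> word_length S (inv x) + word_length S (x \<otimes> y)"
  using word_length_mult[OF S, of "inv x" "x \<otimes> y"] x y by (simp add: m_assoc[symmetric])

lemma (in group) word_length_cancel_right: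
  assumes S: "S \<subseteq> carrier G" "generate G S = carrier G"
    and x: "x \<in> carrier G" and y: "y \<in> carrier G"
  shows "word_length S x \<le> word_length S (x \<otimes> y) + word_length S (inv y)"
  using word_length_mult[OF S, of "x \<otimes> y" "inv y"] x y by (simp add: m_assoc)

section \<open>The extension defined by a cocycle\<close>

locale action_cocycle = A: comm_group A + G: group G
  for A :: "('b, 'n) monoid_scheme" (structure) and G :: "('a, 'm) monoid_scheme" +
  fixes act :: "'a \<Rightarrow> 'b \<Rightarrow> 'b" and \<sigma> :: "'a \<Rightarrow> 'a \<Rightarrow> 'b"
  assumes action: "right_action_by_auts G A act"
    and cocycle: "two_cocycle G A act \<sigma>"
begin

lemma act_hom: "g \<in> carrier G \<Longrightarrow> group_hom A A (act g)"
  using action A.is_group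
  by (simp add: right_action_by_auts_def iso_def group_hom_def group_hom_axioms_def)

lemma act_one: "a \<in> carrier A \<Longrightarrow> act \<one>\<^bsub>G\<^esub> a = a"
  using action by (simp add: right_action_by_auts_def)

lemma act_mult:
  "g \<in> carrier G \<Longrightarrow> h \<in> carrier G \<Longrightarrow> a \<in> carrier A \<Longrightarrow> act (g \<otimes>\<^bsub>G\<^esub> h) a = act h (act g a)"
  using action by (simp add: right_action_by_auts_def)

lemma act_closed [simp]: "g \<in> carrier G \<Longrightarrow> a \<in> carrier A \<Longrightarrow> act g a \<in> carrier A"
  using group_hom.hom_closed[OF act_hom] .

lemma act_m [simp]:
  "g \<in> carrier G \<Longrightarrow> a \<in> carrier A \<Longrightarrow> b \<in> carrier A \<Longrightarrow> act g (a \<otimes> b) = act g a \<otimes> act g b"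
  using group_hom.hom_mult[OF act_hom] .

lemma act_inv [simp]: "g \<in> carrier G \<Longrightarrow> a \<in> carrier A \<Longrightarrow> act g (inv a) = inv (act g a)"
  using group_hom.hom_inv[OF act_hom] .

lemma act_unit [simp]: "g \<in> carrier G \<Longrightarrow> act g \<one> = \<one>"
  using group_hom.hom_one[OF act_hom] .

lemma act_int_pow [simp]:
  "g \<in> carrier G \<Longrightarrow> a \<in> carrier A \<Longrightarrow> act g (a [^] (k::int)) = act g a [^] k"
  using group_hom.hom_int_pow[OF act_hom] .

lemma act_nat_pow [simp]:
  "g \<in> carrier G \<Longrightarrow> a \<in> carrier A \<Longrightarrow> act g (a [^] (n::nat)) = act g a [^] n"
  using group_hom.hom_nat_pow[OF act_hom] .

lemma act_inv_act: "g \<in> carrier G \<Longrightarrow> a \<in> carrier A \<Longrightarrow> act (inv\<^bsub>G\<^esub> g) (act g a) = a"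
  using act_mult[of g "inv\<^bsub>G\<^esub> g" a] act_one by simp

lemma act_act_inv: "g \<in> carrier G \<Longrightarrow> a \<in> carrier A \<Longrightarrow> act g (act (inv\<^bsub>G\<^esub> g) a) = a"
  using act_mult[of "inv\<^bsub>G\<^esub> g" g a] act_one by simp

lemma act_finprod:
  "g \<in> carrier G \<Longrightarrow> f \<in> I \<rightarrow> carrier A \<Longrightarrow> act g (finprod A f I) = finprod A (\<lambda>i. act g (f i)) I"
  using A.hom_finprod[OF A.comm_group_axioms] group_hom.homh[OF act_hom] by blast

lemma cocycle_closed [simp]: "g \<in> carrier G \<Longrightarrow> h \<in> carrier G \<Longrightarrow> \<sigma> g h \<in> carrier A"
  using cocycle by (simp add: two_cocycle_def)

lemma cocycle_identity:
  "g \<in> carrier G \<Longrightarrow> h1 \<in> carrier G \<Longrightarrow> h2 \<in> carrier G \<Longrightarrow>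
    \<sigma> g (h1 \<otimes>\<^bsub>G\<^esub> h2) \<otimes> \<sigma> h1 h2 = act h2 (\<sigma> g h1) \<otimes> \<sigma> (g \<otimes>\<^bsub>G\<^esub> h1) h2"
  using cocycle by (simp add: two_cocycle_def A.m_assoc)

lemma cocycle_one_left: "h \<in> carrier G \<Longrightarrow> \<sigma> \<one>\<^bsub>G\<^esub> h = act h (\<sigma> \<one>\<^bsub>G\<^esub> \<one>\<^bsub>G\<^esub>)"
  using cocycle_identity[of "\<one>\<^bsub>G\<^esub>" "\<one>\<^bsub>G\<^esub>" h] by simp

lemma cocycle_one_right: "g \<in> carrier G \<Longrightarrow> \<sigma> g \<one>\<^bsub>G\<^esub> = \<sigma> \<one>\<^bsub>G\<^esub> \<one>\<^bsub>G\<^esub>"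
  using cocycle_identity[of g "\<one>\<^bsub>G\<^esub>" "\<one>\<^bsub>G\<^esub>"] act_one by simp

text \<open>The extension \<open>A \<rightarrow> E \<rightarrow> G\<close> classified by \<open>\<sigma>\<close>; the unit is \<open>(\<sigma>(1,1)\<^sup>-\<^sup>1, 1)\<close>
  because \<open>\<sigma>\<close> is not assumed to be normalised.\<close>

definition extension :: "('b \<times> 'a) monoid" where
  "extension = \<lparr>carrier = carrier A \<times> carrier G,
     monoid.mult = (\<lambda>(a, g) (b, h). (act h a \<otimes> b \<otimes> \<sigma> g h, g \<otimes>\<^bsub>G\<^esub> h)),
     one = (inv (\<sigma> \<one>\<^bsub>G\<^esub> \<one>\<^bsub>G\<^esub>), \<one>\<^bsub>G\<^esub>)\<rparr>"

lemma extension_carrier [simp]: "carrier extension = carrier A \<times> carrier G"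
  by (simp add: extension_def)

lemma extension_mult [simp]:
  "(a, g) \<otimes>\<^bsub>extension\<^esub> (b, h) = (act h a \<otimes> b \<otimes> \<sigma> g h, g \<otimes>\<^bsub>G\<^esub> h)"
  by (simp add: extension_def)

lemma extension_one [simp]: "\<one>\<^bsub>extension\<^esub> = (inv (\<sigma> \<one>\<^bsub>G\<^esub> \<one>\<^bsub>G\<^esub>), \<one>\<^bsub>G\<^esub>)"
  by (simp add: extension_def)

lemma extension_assoc:
  assumes a: "a \<in> carrier A" and b: "b \<in> carrier A" and c: "c \<in> carrier A"
    and g: "g \<in> carrier G" and h: "h \<in> carrier G" and k: "k \<in> carrier G"
  shows "(a, g) \<otimes>\<^bsub>extension\<^esub> (b, h) \<otimes>\<^bsub>extension\<^esub> (c, k)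
       = (a, g) \<otimes>\<^bsub>extension\<^esub> ((b, h) \<otimes>\<^bsub>extension\<^esub> (c, k))"
proof -
  have "act k (act h a \<otimes> b \<otimes> \<sigma> g h) \<otimes> c \<otimes> \<sigma> (g \<otimes>\<^bsub>G\<^esub> h) k
      = act k (act h a) \<otimes> act k b \<otimes> c \<otimes> (act k (\<sigma> g h) \<otimes> \<sigma> (g \<otimes>\<^bsub>G\<^esub> h) k)"
    using assms by (simp add: A.m_ac)
  also have "act k (\<sigma> g h) \<otimes> \<sigma> (g \<otimes>\<^bsub>G\<^esub> h) k = \<sigma> g (h \<otimes>\<^bsub>G\<^esub> k) \<otimes> \<sigma> h k"
    using cocycle_identity[OF g h k] by simp
  also have "act k (act h a) \<otimes> act k b \<otimes> c \<otimes> (\<sigma> g (h \<otimes>\<^bsub>G\<^esub> k) \<otimes> \<sigma> h k)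
      = act (h \<otimes>\<^bsub>G\<^esub> k) a \<otimes> (act k b \<otimes> c \<otimes> \<sigma> h k) \<otimes> \<sigma> g (h \<otimes>\<^bsub>G\<^esub> k)"
    using assms act_mult[OF h k a] by (simp add: A.m_ac)
  finally show ?thesis using g h k by (simp add: G.m_assoc)
qed

lemma extension_l_one: "x \<in> carrier extension \<Longrightarrow> \<one>\<^bsub>extension\<^esub> \<otimes>\<^bsub>extension\<^esub> x = x"
proof (cases x)
  case (Pair b h)
  assume "x \<in> carrier extension"
  then have b: "b \<in> carrier A" and h: "h \<in> carrier G" using Pair by auto
  have "act h (inv (\<sigma> \<one>\<^bsub>G\<^esub> \<one>\<^bsub>G\<^esub>)) \<otimes> b \<otimes> \<sigma> \<one>\<^bsub>G\<^esub> h
      = b \<otimes> (inv (act h (\<sigma> \<one>\<^bsub>G\<^esub> \<one>\<^bsub>G\<^esub>)) \<otimes> act h (\<sigma> \<one>\<^bsub>G\<^esub> \<one>\<^bsub>G\<^esub>))"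
    using cocycle_one_left[OF h] b h by (simp add: A.m_ac)
  then show ?thesis using Pair b h by simp
qed

lemma extension_l_inv_ex:
  assumes "x \<in> carrier extension"
  shows "\<exists>y\<in>carrier extension. y \<otimes>\<^bsub>extension\<^esub> x = \<one>\<^bsub>extension\<^esub>"
proof -
  obtain a g where x: "x = (a, g)" and a: "a \<in> carrier A" and g: "g \<in> carrier G" using assms by auto
  define z where "z = inv (\<sigma> \<one>\<^bsub>G\<^esub> \<one>\<^bsub>G\<^esub>) \<otimes> inv a \<otimes> inv (\<sigma> (inv\<^bsub>G\<^esub> g) g)"
  have z: "z \<in> carrier A" unfolding z_def using a g by simp
  have "(act (inv\<^bsub>G\<^esub> g) z, inv\<^bsub>G\<^esub> g) \<otimes>\<^bsub>extension\<^esub> x = (z \<otimes> a \<otimes> \<sigma> (inv\<^bsub>G\<^esub> g) g, \<one>\<^bsub>G\<^esub>)"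
    unfolding x using act_act_inv[OF g z] g by simp
  also have "z \<otimes> a \<otimes> \<sigma> (inv\<^bsub>G\<^esub> g) g = inv (\<sigma> \<one>\<^bsub>G\<^esub> \<one>\<^bsub>G\<^esub>)"
  proof -
    have "z \<otimes> a \<otimes> \<sigma> (inv\<^bsub>G\<^esub> g) g
        = inv (\<sigma> \<one>\<^bsub>G\<^esub> \<one>\<^bsub>G\<^esub>) \<otimes> (inv a \<otimes> a) \<otimes> (inv (\<sigma> (inv\<^bsub>G\<^esub> g) g) \<otimes> \<sigma> (inv\<^bsub>G\<^esub> g) g)"
      unfolding z_def using a g by (simp add: A.m_ac del: A.l_inv A.r_inv A.Units_l_inv A.Units_r_inv)
    then show ?thesis using a g by simp
  qed
  finally show ?thesis using z g by (intro bexI[of _ "(act (inv\<^bsub>G\<^esub> g) z, inv\<^bsub>G\<^esub> g)"]) auto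
qed

lemma extension_group: "group extension"
proof (rule groupI)
  fix x y assume "x \<in> carrier extension" "y \<in> carrier extension"
  then show "x \<otimes>\<^bsub>extension\<^esub> y \<in> carrier extension" by (cases x, cases y) auto
next
  show "\<one>\<^bsub>extension\<^esub> \<in> carrier extension" by simp
next
  fix x y z assume "x \<in> carrier extension" "y \<in> carrier extension" "z \<in> carrier extension"
  then show "x \<otimes>\<^bsub>extension\<^esub> y \<otimes>\<^bsub>extension\<^esub> z = x \<otimes>\<^bsub>extension\<^esub> (y \<otimes>\<^bsub>extension\<^esub> z)"
    using extension_assoc by (cases x, cases y, cases z) auto
next
  fix x assume "x \<in> carrier extension"
  then show "\<one>\<^bsub>extension\<^esub> \<otimes>\<^bsub>extension\<^esub> x = x" by (rule extension_l_one)
next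
  fix x assume "x \<in> carrier extension"
  then show "\<exists>y\<in>carrier extension. y \<otimes>\<^bsub>extension\<^esub> x = \<one>\<^bsub>extension\<^esub>" by (rule extension_l_inv_ex)
qed

definition coboundary :: "('a \<Rightarrow> 'b) \<Rightarrow> 'a \<Rightarrow> 'a \<Rightarrow> 'b" where
  "coboundary f g h = act h (f g) \<otimes> f h \<otimes> inv (f (g \<otimes>\<^bsub>G\<^esub> h))"

lemma two_cocycle_coboundary:
  assumes f: "f \<in> carrier G \<rightarrow> carrier A"
  shows "two_cocycle G A act (coboundary f)"
  unfolding two_cocycle_def
proof (intro conjI ballI)
  fix g h assume "g \<in> carrier G" "h \<in> carrier G"
  then show "coboundary f g h \<in> carrier A" using f by (simp add: coboundary_def Pi_iff)
next
  fix g h1 h2 assume g: "g \<in> carrier G" and h1: "h1 \<in> carrier G" and h2: "h2 \<in> carrier G"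
  have gh1: "g \<otimes>\<^bsub>G\<^esub> h1 \<in> carrier G" and h12: "h1 \<otimes>\<^bsub>G\<^esub> h2 \<in> carrier G"
    and gh12: "g \<otimes>\<^bsub>G\<^esub> h1 \<otimes>\<^bsub>G\<^esub> h2 \<in> carrier G" using g h1 h2 by auto
  note fc = funcset_mem[OF f g] funcset_mem[OF f h1] funcset_mem[OF f h2]
    funcset_mem[OF f gh1] funcset_mem[OF f h12] funcset_mem[OF f gh12]
  have "act h2 (coboundary f g h1) \<otimes> coboundary f (g \<otimes>\<^bsub>G\<^esub> h1) h2 \<otimes> inv (coboundary f h1 h2)
      = (act h2 (act h1 (f g)) \<otimes> f (h1 \<otimes>\<^bsub>G\<^esub> h2) \<otimes> inv (f (g \<otimes>\<^bsub>G\<^esub> h1 \<otimes>\<^bsub>G\<^esub> h2)))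
        \<otimes> ((act h2 (f h1) \<otimes> inv (act h2 (f h1)))
          \<otimes> (inv (act h2 (f (g \<otimes>\<^bsub>G\<^esub> h1))) \<otimes> act h2 (f (g \<otimes>\<^bsub>G\<^esub> h1))) \<otimes> (f h2 \<otimes> inv (f h2)))"
    unfolding coboundary_def using fc g h1 h2 gh1
    by (simp add: A.inv_mult A.m_ac del: A.l_inv A.r_inv A.Units_l_inv A.Units_r_inv)
  also have "\<dots> = act (h1 \<otimes>\<^bsub>G\<^esub> h2) (f g) \<otimes> f (h1 \<otimes>\<^bsub>G\<^esub> h2) \<otimes> inv (f (g \<otimes>\<^bsub>G\<^esub> (h1 \<otimes>\<^bsub>G\<^esub> h2)))"
    using fc g h1 h2 gh1 act_mult[OF h1 h2 fc(1)] by (simp add: G.m_assoc)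
  finally show "coboundary f g (h1 \<otimes>\<^bsub>G\<^esub> h2)
      = act h2 (coboundary f g h1) \<otimes> coboundary f (g \<otimes>\<^bsub>G\<^esub> h1) h2 \<otimes> inv (coboundary f h1 h2)"
    unfolding coboundary_def by simp
qed

lemma two_cocycle_mult:
  assumes "two_cocycle G A act \<tau>" and "two_cocycle G A act \<rho>"
  shows "two_cocycle G A act (\<lambda>g h. \<tau> g h \<otimes> \<rho> g h)"
  unfolding two_cocycle_def
proof (intro conjI ballI)
  fix g h assume "g \<in> carrier G" "h \<in> carrier G"
  then show "\<tau> g h \<otimes> \<rho> g h \<in> carrier A" using assms by (simp add: two_cocycle_def)
next
  fix g h1 h2 assume g: "g \<in> carrier G" and h1: "h1 \<in> carrier G" and h2: "h2 \<in> carrier G"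
  then have gh1: "g \<otimes>\<^bsub>G\<^esub> h1 \<in> carrier G" by simp
  have c: "\<tau> x y \<in> carrier A" "\<rho> x y \<in> carrier A" if "x \<in> carrier G" "y \<in> carrier G" for x y
    using assms that by (simp_all add: two_cocycle_def)
  show "\<tau> g (h1 \<otimes>\<^bsub>G\<^esub> h2) \<otimes> \<rho> g (h1 \<otimes>\<^bsub>G\<^esub> h2)
      = act h2 (\<tau> g h1 \<otimes> \<rho> g h1) \<otimes> (\<tau> (g \<otimes>\<^bsub>G\<^esub> h1) h2 \<otimes> \<rho> (g \<otimes>\<^bsub>G\<^esub> h1) h2)
        \<otimes> inv (\<tau> h1 h2 \<otimes> \<rho> h1 h2)"
    using assms g h1 h2 c[OF g h1] c[OF gh1 h2] c[OF h1 h2] unfolding two_cocycle_def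
    by (simp add: A.inv_mult A.m_ac)
qed

end

sublocale action_cocycle \<subseteq> E: group extension
  by (rule extension_group)

context action_cocycle
begin

definition ext_incl :: "'b \<Rightarrow> 'b \<times> 'a" where
  "ext_incl a = (a \<otimes> inv (\<sigma> \<one>\<^bsub>G\<^esub> \<one>\<^bsub>G\<^esub>), \<one>\<^bsub>G\<^esub>)"

lemma ext_incl_hom: "group_hom A extension ext_incl"
proof -
  have "ext_incl \<in> hom A extension"
  proof (rule homI)
    fix a b assume a: "a \<in> carrier A" and b: "b \<in> carrier A"
    have "act \<one>\<^bsub>G\<^esub> (a \<otimes> inv (\<sigma> \<one>\<^bsub>G\<^esub> \<one>\<^bsub>G\<^esub>)) \<otimes> (b \<otimes> inv (\<sigma> \<one>\<^bsub>G\<^esub> \<one>\<^bsub>G\<^esub>)) \<otimes> \<sigma> \<one>\<^bsub>G\<^esub> \<one>\<^bsub>G\<^esub>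
        = (a \<otimes> b \<otimes> inv (\<sigma> \<one>\<^bsub>G\<^esub> \<one>\<^bsub>G\<^esub>)) \<otimes> (inv (\<sigma> \<one>\<^bsub>G\<^esub> \<one>\<^bsub>G\<^esub>) \<otimes> \<sigma> \<one>\<^bsub>G\<^esub> \<one>\<^bsub>G\<^esub>)"
      using a b act_one by (simp add: A.m_ac del: A.l_inv A.r_inv A.Units_l_inv A.Units_r_inv)
    then show "ext_incl (a \<otimes> b) = ext_incl a \<otimes>\<^bsub>extension\<^esub> ext_incl b"
      using a b by (simp add: ext_incl_def)
  qed (simp add: ext_incl_def)
  then show ?thesis by (simp add: group_hom_def group_hom_axioms_def A.is_group E.is_group)
qed

lemma snd_hom: "group_hom extension G snd"
proof -
  have "snd \<in> hom extension G" by (rule homI) auto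
  then show ?thesis by (simp add: group_hom_def group_hom_axioms_def G.is_group E.is_group)
qed

lemma generate_extension:
  assumes SA: "SA \<subseteq> carrier A" "generate A SA = carrier A"
    and SG: "SG \<subseteq> carrier G" "generate G SG = carrier G"
  shows "generate extension (ext_incl ` SA \<union> (\<lambda>g. (\<one>, g)) ` SG) = carrier extension"
    (is "generate extension ?S = _")
proof
  have S: "?S \<subseteq> carrier extension"
    using SA SG by (auto simp: ext_incl_def)
  then show "generate extension ?S \<subseteq> carrier extension" by (rule E.generate_incl)
  let ?H = "generate extension ?S"
  have sub: "subgroup ?H extension" using E.generate_is_subgroup[OF S] .
  have incl_H: "ext_incl a \<in> ?H" if "a \<in> carrier A" for a
  proof -
    have "ext_incl ` carrier A = generate extension (ext_incl ` SA)"
      using group_hom.generate_img[OF ext_incl_hom SA(1)] SA(2) by simp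
    also have "\<dots> \<subseteq> ?H" by (rule E.mono_generate) blast
    finally show ?thesis using that by blast
  qed
  have fibre_H: "\<exists>c. (c, g) \<in> ?H" if "g \<in> carrier G" for g
  proof -
    have "carrier G = generate G SG" using SG(2) by simp
    also have "\<dots> \<subseteq> generate G (snd ` ?S)" by (rule G.mono_generate) force
    also have "\<dots> = snd ` ?H" using group_hom.generate_img[OF snd_hom S] .
    finally show ?thesis using that by force
  qed
  show "carrier extension \<subseteq> ?H"
  proof
    fix x assume "x \<in> carrier extension"
    then obtain a g where x: "x = (a, g)" and a: "a \<in> carrier A" and g: "g \<in> carrier G" by auto
    obtain c where cH: "(c, g) \<in> ?H" using fibre_H[OF g] by blast
    have c: "c \<in> carrier A" using subgroup.mem_carrier[OF sub cH] by simp
    have "act \<one>\<^bsub>G\<^esub> c \<otimes> (inv c \<otimes> a \<otimes> inv (\<sigma> \<one>\<^bsub>G\<^esub> \<one>\<^bsub>G\<^esub>)) \<otimes> \<sigma> g \<one>\<^bsub>G\<^esub>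
        = a \<otimes> (c \<otimes> inv c) \<otimes> (inv (\<sigma> \<one>\<^bsub>G\<^esub> \<one>\<^bsub>G\<^esub>) \<otimes> \<sigma> \<one>\<^bsub>G\<^esub> \<one>\<^bsub>G\<^esub>)"
      using a c g act_one cocycle_one_right[OF g]
      by (simp add: A.m_ac del: A.l_inv A.r_inv A.Units_l_inv A.Units_r_inv)
    then have "(c, g) \<otimes>\<^bsub>extension\<^esub> ext_incl (inv c \<otimes> a) = x"
      unfolding x ext_incl_def using a c g by simp
    then show "x \<in> ?H" using subgroup.m_closed[OF sub cH incl_H] a c by fastforce
  qed
qed

lemma fin_gen_extension:
  assumes "fin_gen_group A" and "fin_gen_group G"
  shows "fin_gen_group extension"
proof -
  obtain SA SG where "finite SA" "SA \<subseteq> carrier A" "generate A SA = carrier A"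
    and "finite SG" "SG \<subseteq> carrier G" "generate G SG = carrier G"
    using assms unfolding fin_gen_group_def by blast
  then show ?thesis
    unfolding fin_gen_group_def using generate_extension
    by (intro exI[of _ "ext_incl ` SA \<union> (\<lambda>g. (\<one>, g)) ` SG"]) (auto simp: ext_incl_def)
qed

end

section \<open>Undistortion of the coefficients\<close>

locale fg_action_cocycle = action_cocycle A G act \<sigma>
  for A :: "('b, 'n) monoid_scheme" (structure) and G :: "('a, 'm) monoid_scheme" and act \<sigma> +
  fixes N :: nat and m :: nat and \<psi> :: "nat \<Rightarrow> 'b \<Rightarrow> int" and w :: "nat \<Rightarrow> 'b"
  assumes fin_gen: "fin_gen_group A" "fin_gen_group G"
    and finite_image: "finite_action_image G A act"
    and coords: "int_coordinates A (carrier A) N m \<psi> w"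
    and finite_torsion: "finite (torsion A (carrier A))"
begin

definition gens :: "('b \<times> 'a) set" where
  "gens = (SOME S. finite S \<and> S \<subseteq> carrier extension \<and> generate extension S = carrier extension)"

lemma gens: "finite gens" "gens \<subseteq> carrier extension" "generate extension gens = carrier extension"
  using someI_ex[OF fin_gen_extension[OF fin_gen, unfolded fin_gen_group_def]]
  unfolding gens_def by auto

abbreviation letters :: "('b \<times> 'a) set" where
  "letters \<equiv> gens \<union> m_inv extension ` gens"

lemma letters_closed: "letters \<subseteq> carrier extension"
  using gens(2) E.inv_closed by blast

definition len :: "'b \<times> 'a \<Rightarrow> nat" where
  "len = E.word_length gens"

lemma len_mult:
  "x \<in> carrier extension \<Longrightarrow> y \<in> carrier extension \<Longrightarrow> len (x \<otimes>\<^bsub>extension\<^esub> y) \<le> len x + len y"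
  unfolding len_def using E.word_length_mult[OF gens(2,3)] .

lemma len_cancel_left:
  "x \<in> carrier extension \<Longrightarrow> y \<in> carrier extension \<Longrightarrow>
    len y \<le> len (inv\<^bsub>extension\<^esub> x) + len (x \<otimes>\<^bsub>extension\<^esub> y)"
  unfolding len_def using E.word_length_cancel_left[OF gens(2,3)] .

lemma len_cancel_right:
  "x \<in> carrier extension \<Longrightarrow> y \<in> carrier extension \<Longrightarrow>
    len x \<le> len (x \<otimes>\<^bsub>extension\<^esub> y) + len (inv\<^bsub>extension\<^esub> y)"
  unfolding len_def using E.word_length_cancel_right[OF gens(2,3)] .

lemma len_word:
  assumes "e \<in> carrier extension"
  obtains ws where "set ws \<subseteq> letters" "length ws = len e" "E.word_prod ws = e"
  using E.word_length_word[OF gens(2)] assms gens(3) unfolding len_def by metis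

lemma bounded_by_len_right:
  fixes f :: "'b \<times> 'a \<Rightarrow> int"
  assumes step: "\<And>s e. s \<in> letters \<Longrightarrow> e \<in> carrier extension \<Longrightarrow> f (e \<otimes>\<^bsub>extension\<^esub> s) \<le> f e + K"
    and e: "e \<in> carrier extension"
  shows "f e \<le> K * int (len e) + f \<one>\<^bsub>extension\<^esub>"
proof -
  have "f (E.word_prod ws) \<le> K * int (length ws) + f \<one>\<^bsub>extension\<^esub>" if "set ws \<subseteq> letters" for ws
    using that
  proof (induct ws rule: rev_induct)
    case (snoc s ws)
    have s: "s \<in> letters" and ws: "set ws \<subseteq> letters" using snoc.prems by auto
    have wsc: "set ws \<subseteq> carrier extension" using ws letters_closed by (rule order_trans)
    have "E.word_prod (ws @ [s]) = E.word_prod ws \<otimes>\<^bsub>extension\<^esub> s"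
      using E.word_prod_snoc[OF wsc] s letters_closed by blast
    then have "f (E.word_prod (ws @ [s])) \<le> f (E.word_prod ws) + K"
      using step[OF s E.word_prod_closed[OF wsc]] by simp
    then show ?case using snoc by (simp add: algebra_simps)
  qed (simp add: E.word_prod_def)
  then show ?thesis using len_word[OF e] by metis
qed

lemma bounded_by_len_left:
  fixes f :: "'b \<times> 'a \<Rightarrow> int"
  assumes step: "\<And>s e. s \<in> letters \<Longrightarrow> e \<in> carrier extension \<Longrightarrow> f (s \<otimes>\<^bsub>extension\<^esub> e) \<le> f e + K"
    and e: "e \<in> carrier extension"
  shows "f e \<le> K * int (len e) + f \<one>\<^bsub>extension\<^esub>"
proof -
  have "f (E.word_prod ws) \<le> K * int (length ws) + f \<one>\<^bsub>extension\<^esub>" if "set ws \<subseteq> letters" for ws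
    using that
  proof (induct ws)
    case (Cons s ws)
    have s: "s \<in> letters" and ws: "set ws \<subseteq> letters" using Cons.prems by auto
    have wsc: "set ws \<subseteq> carrier extension" using ws letters_closed by (rule order_trans)
    have "E.word_prod (s # ws) = s \<otimes>\<^bsub>extension\<^esub> E.word_prod ws" by (simp add: E.word_prod_def)
    then have "f (E.word_prod (s # ws)) \<le> f (E.word_prod ws) + K"
      using step[OF s E.word_prod_closed[OF wsc]] by simp
    then show ?case using Cons by (simp add: algebra_simps)
  qed (simp add: E.word_prod_def)
  then show ?thesis using len_word[OF e] by metis
qed

lemma N_pos: "N > 0"
  using coords unfolding int_coordinates_def by simp

lemma psi_mult: "j < m \<Longrightarrow> x \<in> carrier A \<Longrightarrow> y \<in> carrier A \<Longrightarrow> \<psi> j (x \<otimes> y) = \<psi> j x + \<psi> j y"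
  using coords unfolding int_coordinates_def by blast

lemma w_closed: "j < m \<Longrightarrow> w j \<in> carrier A"
  using coords unfolding int_coordinates_def by blast

lemma finprod_w_psi: "a \<in> carrier A \<Longrightarrow> finprod A (\<lambda>j. w j [^] \<psi> j a) {..<m} = a [^] N"
  using coords unfolding int_coordinates_def by blast

lemma psi_int_pow: "j < m \<Longrightarrow> x \<in> carrier A \<Longrightarrow> \<psi> j (x [^] (k::int)) = k * \<psi> j x"
  using A.additive_int_pow[OF A.subgroup_self] psi_mult by blast

lemma psi_inv: "j < m \<Longrightarrow> x \<in> carrier A \<Longrightarrow> \<psi> j (inv x) = - \<psi> j x"
  using psi_int_pow[of j x "-1"] by (simp add: A.int_pow_neg)

definition act_image :: "('b \<Rightarrow> 'b) set" where
  "act_image = (\<lambda>g. restrict (act g) (carrier A)) ` carrier G"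

lemma finite_act_image: "finite act_image"
  using finite_image unfolding finite_action_image_def act_image_def .

lemma act_imageE:
  assumes "\<gamma> \<in> act_image"
  obtains r where "r \<in> carrier G" "\<gamma> = restrict (act r) (carrier A)"
  using assms unfolding act_image_def by blast

lemma act_image_closed: "\<gamma> \<in> act_image \<Longrightarrow> a \<in> carrier A \<Longrightarrow> \<gamma> a \<in> carrier A"
  by (auto elim: act_imageE)

lemma act_image_mult:
  "\<gamma> \<in> act_image \<Longrightarrow> a \<in> carrier A \<Longrightarrow> b \<in> carrier A \<Longrightarrow> \<gamma> (a \<otimes> b) = \<gamma> a \<otimes> \<gamma> b"
  by (auto elim: act_imageE)

lemma act_image_inv: "\<gamma> \<in> act_image \<Longrightarrow> a \<in> carrier A \<Longrightarrow> \<gamma> (inv a) = inv (\<gamma> a)"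
  by (auto elim: act_imageE)

definition shift :: "'a \<Rightarrow> ('b \<Rightarrow> 'b) \<Rightarrow> 'b \<Rightarrow> 'b" where
  "shift h \<gamma> = restrict (\<lambda>a. \<gamma> (act h a)) (carrier A)"

lemma shift_apply: "a \<in> carrier A \<Longrightarrow> shift h \<gamma> a = \<gamma> (act h a)"
  unfolding shift_def by simp

lemma shift_mem: "h \<in> carrier G \<Longrightarrow> \<gamma> \<in> act_image \<Longrightarrow> shift h \<gamma> \<in> act_image"
proof (elim act_imageE)
  fix r assume h: "h \<in> carrier G" and r: "r \<in> carrier G" and \<gamma>: "\<gamma> = restrict (act r) (carrier A)"
  have "shift h \<gamma> = restrict (act (h \<otimes>\<^bsub>G\<^esub> r)) (carrier A)"
    unfolding shift_def \<gamma> using act_mult[OF h r] h by (auto simp: fun_eq_iff)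
  then show "shift h \<gamma> \<in> act_image" unfolding act_image_def using h r by blast
qed

lemma inj_on_shift: "h \<in> carrier G \<Longrightarrow> inj_on (shift h) act_image"
proof (rule inj_onI)
  fix \<gamma>1 \<gamma>2 assume h: "h \<in> carrier G" and "\<gamma>1 \<in> act_image" "\<gamma>2 \<in> act_image"
    and eq: "shift h \<gamma>1 = shift h \<gamma>2"
  then obtain r1 r2 where "\<gamma>1 = restrict (act r1) (carrier A)" "\<gamma>2 = restrict (act r2) (carrier A)"
    by (auto elim!: act_imageE)
  moreover have "\<gamma>1 b = \<gamma>2 b" if "b \<in> carrier A" for b
    using fun_cong[OF eq, of "act (inv\<^bsub>G\<^esub> h) b"] h that by (simp add: shift_apply act_act_inv)
  ultimately show "\<gamma>1 = \<gamma>2" by (auto simp: fun_eq_iff)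
qed

lemma shift_image: "h \<in> carrier G \<Longrightarrow> shift h ` act_image = act_image"
  using endo_inj_surj[OF finite_act_image _ inj_on_shift] shift_mem by blast

definition coord_norm :: "'b \<Rightarrow> int" where
  "coord_norm a = (\<Sum>\<gamma>\<in>act_image. \<Sum>j<m. \<bar>\<psi> j (\<gamma> a)\<bar>)"

lemma coord_norm_nonneg: "coord_norm a \<ge> 0"
  unfolding coord_norm_def by (intro sum_nonneg) auto

lemma abs_psi_le_coord_norm: "\<gamma> \<in> act_image \<Longrightarrow> j < m \<Longrightarrow> \<bar>\<psi> j (\<gamma> a)\<bar> \<le> coord_norm a"
  unfolding coord_norm_def using finite_act_image
  by (intro order_trans[OF member_le_sum member_le_sum[where f = "\<lambda>\<gamma>. \<Sum>j<m. \<bar>\<psi> j (\<gamma> a)\<bar>"]])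
    (auto intro: sum_nonneg)

lemma coord_norm_mult:
  assumes "a \<in> carrier A" "b \<in> carrier A"
  shows "coord_norm (a \<otimes> b) \<le> coord_norm a + coord_norm b"
proof -
  have "coord_norm (a \<otimes> b) = (\<Sum>\<gamma>\<in>act_image. \<Sum>j<m. \<bar>\<psi> j (\<gamma> a) + \<psi> j (\<gamma> b)\<bar>)"
    unfolding coord_norm_def using assms
    by (intro sum.cong refl) (simp add: act_image_mult act_image_closed psi_mult)
  also have "\<dots> \<le> (\<Sum>\<gamma>\<in>act_image. \<Sum>j<m. \<bar>\<psi> j (\<gamma> a)\<bar> + \<bar>\<psi> j (\<gamma> b)\<bar>)"
    by (intro sum_mono abs_triangle_ineq)
  also have "\<dots> = coord_norm a + coord_norm b" unfolding coord_norm_def by (simp add: sum.distrib)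
  finally show ?thesis .
qed

lemma coord_norm_act:
  assumes h: "h \<in> carrier G" and a: "a \<in> carrier A"
  shows "coord_norm (act h a) = coord_norm a"
proof -
  let ?F = "\<lambda>\<gamma>. \<Sum>j<m. \<bar>\<psi> j (\<gamma> a)\<bar>"
  have "coord_norm (act h a) = sum (?F \<circ> shift h) act_image"
    unfolding coord_norm_def by (simp add: shift_apply[OF a])
  also have "\<dots> = sum ?F (shift h ` act_image)" by (rule sum.reindex[OF inj_on_shift[OF h], symmetric])
  finally show ?thesis unfolding shift_image[OF h] coord_norm_def .
qed

lemma coord_norm_fst_mult:
  assumes "a \<in> carrier A" "b \<in> carrier A" "g \<in> carrier G" "h \<in> carrier G"
  shows "coord_norm (fst ((a, g) \<otimes>\<^bsub>extension\<^esub> (b, h)))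
    \<le> coord_norm a + coord_norm b + coord_norm (\<sigma> g h)"
  using assms coord_norm_mult[of "act h a \<otimes> b" "\<sigma> g h"] coord_norm_mult[of "act h a" b]
    coord_norm_act[of h a] by simp

lemma letter_step_right:
  assumes "right_weakly_bounded G \<sigma>"
  shows "\<exists>K\<ge>0. \<forall>s\<in>letters. \<forall>e\<in>carrier extension.
    coord_norm (fst (e \<otimes>\<^bsub>extension\<^esub> s)) \<le> coord_norm (fst e) + K"
proof -
  define C where "C h = (\<Sum>x\<in>(\<lambda>g. \<sigma> g h) ` carrier G. coord_norm x)" for h
  define K where "K = (\<Sum>s\<in>letters. coord_norm (fst s) + C (snd s))"
  have C: "coord_norm (\<sigma> g h) \<le> C h" if "g \<in> carrier G" "h \<in> carrier G" for g h
    using assms that unfolding right_weakly_bounded_def C_def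
    by (intro member_le_sum) (auto simp: coord_norm_nonneg)
  have C_nonneg: "C h \<ge> 0" for h unfolding C_def by (intro sum_nonneg coord_norm_nonneg)
  have "K \<ge> 0" unfolding K_def by (intro sum_nonneg add_nonneg_nonneg coord_norm_nonneg C_nonneg)
  moreover have "coord_norm (fst (e \<otimes>\<^bsub>extension\<^esub> s)) \<le> coord_norm (fst e) + K"
    if s: "s \<in> letters" and e: "e \<in> carrier extension" for s e
  proof -
    have "s \<in> carrier extension" using s letters_closed by blast
    then obtain b h where sb: "s = (b, h)" and b: "b \<in> carrier A" and h: "h \<in> carrier G" by auto
    obtain a g where ea: "e = (a, g)" and a: "a \<in> carrier A" and g: "g \<in> carrier G"
      using e by auto
    have "coord_norm (fst s) + C (snd s) \<le> K"
      unfolding K_def using s gens(1)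
      by (intro member_le_sum) (auto intro!: add_nonneg_nonneg coord_norm_nonneg C_nonneg)
    then show ?thesis using coord_norm_fst_mult[OF a b g h] C[OF g h] unfolding sb ea by simp
  qed
  ultimately show ?thesis by blast
qed

lemma letter_step_left:
  assumes "left_weakly_bounded G \<sigma>"
  shows "\<exists>K\<ge>0. \<forall>s\<in>letters. \<forall>e\<in>carrier extension.
    coord_norm (fst (s \<otimes>\<^bsub>extension\<^esub> e)) \<le> coord_norm (fst e) + K"
proof -
  define C where "C h = (\<Sum>x\<in>(\<lambda>g. \<sigma> h g) ` carrier G. coord_norm x)" for h
  define K where "K = (\<Sum>s\<in>letters. coord_norm (fst s) + C (snd s))"
  have C: "coord_norm (\<sigma> h g) \<le> C h" if "g \<in> carrier G" "h \<in> carrier G" for g h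
    using assms that unfolding left_weakly_bounded_def C_def
    by (intro member_le_sum) (auto simp: coord_norm_nonneg)
  have C_nonneg: "C h \<ge> 0" for h unfolding C_def by (intro sum_nonneg coord_norm_nonneg)
  have "K \<ge> 0" unfolding K_def by (intro sum_nonneg add_nonneg_nonneg coord_norm_nonneg C_nonneg)
  moreover have "coord_norm (fst (s \<otimes>\<^bsub>extension\<^esub> e)) \<le> coord_norm (fst e) + K"
    if s: "s \<in> letters" and e: "e \<in> carrier extension" for s e
  proof -
    have "s \<in> carrier extension" using s letters_closed by blast
    then obtain b h where sb: "s = (b, h)" and b: "b \<in> carrier A" and h: "h \<in> carrier G" by auto
    obtain a g where ea: "e = (a, g)" and a: "a \<in> carrier A" and g: "g \<in> carrier G"
      using e by auto
    have "coord_norm (fst s) + C (snd s) \<le> K"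
      unfolding K_def using s gens(1)
      by (intro member_le_sum) (auto intro!: add_nonneg_nonneg coord_norm_nonneg C_nonneg)
    then show ?thesis using coord_norm_fst_mult[OF b a h g] C[OF g h] unfolding sb ea by simp
  qed
  ultimately show ?thesis by blast
qed

lemma coord_norm_le_len:
  assumes "right_weakly_bounded G \<sigma> \<or> left_weakly_bounded G \<sigma>"
  obtains K K1 where "K \<ge> 0"
    and "\<And>e. e \<in> carrier extension \<Longrightarrow> coord_norm (fst e) \<le> K * int (len e) + K1"
  using assms
proof
  assume "right_weakly_bounded G \<sigma>"
  then obtain K where K: "K \<ge> 0" and step: "\<forall>s\<in>letters. \<forall>e\<in>carrier extension.
      coord_norm (fst (e \<otimes>\<^bsub>extension\<^esub> s)) \<le> coord_norm (fst e) + K"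
    using letter_step_right by blast
  show thesis
    by (rule that[OF K bounded_by_len_right[where f = "\<lambda>e. coord_norm (fst e)", OF step[rule_format]]])
next
  assume "left_weakly_bounded G \<sigma>"
  then obtain K where K: "K \<ge> 0" and step: "\<forall>s\<in>letters. \<forall>e\<in>carrier extension.
      coord_norm (fst (s \<otimes>\<^bsub>extension\<^esub> e)) \<le> coord_norm (fst e) + K"
    using letter_step_left by blast
  show thesis
    by (rule that[OF K bounded_by_len_left[where f = "\<lambda>e. coord_norm (fst e)", OF step[rule_format]]])
qed

end

section \<open>Reassembling integer exponents\<close>

context fg_action_cocycle
begin

definition rep :: "('b \<Rightarrow> 'b) \<Rightarrow> 'a" where
  "rep \<gamma> = (SOME r. r \<in> carrier G \<and> \<gamma> = restrict (act r) (carrier A))"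

lemma rep: "\<gamma> \<in> act_image \<Longrightarrow> rep \<gamma> \<in> carrier G \<and> \<gamma> = restrict (act (rep \<gamma>)) (carrier A)"
  unfolding rep_def by (rule someI_ex) (auto elim: act_imageE)

lemma act_rep: "\<gamma> \<in> act_image \<Longrightarrow> a \<in> carrier A \<Longrightarrow> act (rep \<gamma>) a = \<gamma> a"
  using rep by (metis restrict_apply')

definition basis :: "nat \<Rightarrow> ('b \<Rightarrow> 'b) \<Rightarrow> 'b" where
  "basis j \<gamma> = act (inv\<^bsub>G\<^esub> (rep \<gamma>)) (w j)"

lemma basis_closed: "j < m \<Longrightarrow> \<gamma> \<in> act_image \<Longrightarrow> basis j \<gamma> \<in> carrier A"
  unfolding basis_def using rep w_closed by simp

lemma basis_shift:
  assumes j: "j < m" and h: "h \<in> carrier G" and \<gamma>: "\<gamma> \<in> act_image"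
  shows "basis j \<gamma> = act h (basis j (shift h \<gamma>))"
proof -
  let ?r = "rep \<gamma>" and ?r' = "rep (shift h \<gamma>)"
  have r: "?r \<in> carrier G" and r': "?r' \<in> carrier G" using rep \<gamma> shift_mem[OF h \<gamma>] by auto
  let ?x = "act h (basis j (shift h \<gamma>))"
  have x: "?x \<in> carrier A" using h basis_closed[OF j shift_mem[OF h \<gamma>]] by simp
  have "act ?r ?x = act ?r' (act (inv\<^bsub>G\<^esub> ?r') (w j))"
    using act_rep[OF \<gamma>] act_rep[OF shift_mem[OF h \<gamma>]] shift_apply basis_closed[OF j shift_mem[OF h \<gamma>]] h
    unfolding basis_def by simp
  also have "\<dots> = w j" using act_act_inv[OF r' w_closed[OF j]] .
  finally have "act (inv\<^bsub>G\<^esub> ?r) (act ?r ?x) = basis j \<gamma>" unfolding basis_def by simp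
  then show ?thesis using act_inv_act[OF r x] by simp
qed

text \<open>Twisting the \<open>w\<^sub>j\<close> by \<open>\<gamma>\<^sup>-\<^sup>1\<close> makes \<open>assemble\<close> commute with the action
  (\<open>assemble_shift\<close>).\<close>

definition assemble :: "(nat \<Rightarrow> ('b \<Rightarrow> 'b) \<Rightarrow> int) \<Rightarrow> 'b" where
  "assemble e = (\<Otimes>\<gamma>\<in>act_image. \<Otimes>j\<in>{..<m}. basis j \<gamma> [^] e j \<gamma>)"

lemma assemble_inner_closed:
  "\<gamma> \<in> act_image \<Longrightarrow> (\<Otimes>j\<in>{..<m}. basis j \<gamma> [^] (e j \<gamma> :: int)) \<in> carrier A"
  by (intro A.finprod_closed) (auto simp: basis_closed)

lemma assemble_closed: "assemble e \<in> carrier A"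
  unfolding assemble_def by (intro A.finprod_closed) (auto simp: assemble_inner_closed)

lemma assemble_cong:
  "(\<And>j \<gamma>. j < m \<Longrightarrow> \<gamma> \<in> act_image \<Longrightarrow> e1 j \<gamma> = e2 j \<gamma>) \<Longrightarrow> assemble e1 = assemble e2"
  unfolding assemble_def by (intro A.finprod_cong' refl) (auto simp: assemble_inner_closed basis_closed)

lemma assemble_add: "assemble (\<lambda>j \<gamma>. e1 j \<gamma> + e2 j \<gamma>) = assemble e1 \<otimes> assemble e2"
proof -
  have "assemble (\<lambda>j \<gamma>. e1 j \<gamma> + e2 j \<gamma>)
      = (\<Otimes>\<gamma>\<in>act_image. (\<Otimes>j\<in>{..<m}. basis j \<gamma> [^] e1 j \<gamma>) \<otimes> (\<Otimes>j\<in>{..<m}. basis j \<gamma> [^] e2 j \<gamma>))"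
    unfolding assemble_def
    by (intro A.finprod_cong' refl A.finprod_int_pow_add) (auto simp: assemble_inner_closed basis_closed)
  also have "\<dots> = assemble e1 \<otimes> assemble e2"
    unfolding assemble_def by (rule A.finprod_multf) (auto simp: assemble_inner_closed)
  finally show ?thesis .
qed

lemma assemble_scale: "assemble (\<lambda>j \<gamma>. c * e j \<gamma>) = assemble e [^] (c::int)"
proof -
  have "(\<Otimes>j\<in>{..<m}. basis j \<gamma> [^] (c * e j \<gamma>)) = (\<Otimes>j\<in>{..<m}. basis j \<gamma> [^] e j \<gamma>) [^] c"
    if "\<gamma> \<in> act_image" for \<gamma>
  proof -
    have "(\<Otimes>j\<in>{..<m}. basis j \<gamma> [^] (c * e j \<gamma>)) = (\<Otimes>j\<in>{..<m}. (basis j \<gamma> [^] e j \<gamma>) [^] c)"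
      using that by (intro A.finprod_cong') (auto simp: basis_closed A.int_pow_pow mult.commute)
    then show ?thesis using that by (simp add: A.finprod_int_pow basis_closed)
  qed
  then have "assemble (\<lambda>j \<gamma>. c * e j \<gamma>) = (\<Otimes>\<gamma>\<in>act_image. (\<Otimes>j\<in>{..<m}. basis j \<gamma> [^] e j \<gamma>) [^] c)"
    unfolding assemble_def by (intro A.finprod_cong') (auto simp: assemble_inner_closed)
  also have "\<dots> = assemble e [^] c"
    unfolding assemble_def by (rule A.finprod_int_pow) (auto simp: assemble_inner_closed)
  finally show ?thesis .
qed

lemma assemble_neg: "assemble (\<lambda>j \<gamma>. - e j \<gamma>) = inv (assemble e)"
  using assemble_scale[of "-1" e] assemble_closed by (simp add: A.int_pow_neg)

lemma assemble_coords:
  assumes a: "a \<in> carrier A"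
  shows "assemble (\<lambda>j \<gamma>. \<psi> j (\<gamma> a)) = a [^] (N * card act_image)"
proof -
  have "(\<Otimes>j\<in>{..<m}. basis j \<gamma> [^] \<psi> j (\<gamma> a)) = a [^] N" if \<gamma>: "\<gamma> \<in> act_image" for \<gamma>
  proof -
    let ?r = "rep \<gamma>"
    have r: "?r \<in> carrier G" using rep[OF \<gamma>] by blast
    have "(\<Otimes>j\<in>{..<m}. basis j \<gamma> [^] \<psi> j (\<gamma> a))
        = (\<Otimes>j\<in>{..<m}. act (inv\<^bsub>G\<^esub> ?r) (w j [^] \<psi> j (act ?r a)))"
      using r a w_closed act_rep[OF \<gamma> a] by (intro A.finprod_cong') (auto simp: basis_def)
    also have "\<dots> = act (inv\<^bsub>G\<^esub> ?r) (\<Otimes>j\<in>{..<m}. w j [^] \<psi> j (act ?r a))"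
      using r w_closed by (intro act_finprod[symmetric]) auto
    also have "\<dots> = a [^] N" using finprod_w_psi r a act_inv_act by simp
    finally show ?thesis .
  qed
  then have "assemble (\<lambda>j \<gamma>. \<psi> j (\<gamma> a)) = (\<Otimes>\<gamma>\<in>act_image. a [^] N)"
    unfolding assemble_def using a by (intro A.finprod_cong') auto
  also have "\<dots> = a [^] (N * card act_image)" using a by (simp add: A.finprod_const A.nat_pow_pow)
  finally show ?thesis .
qed

lemma assemble_shift:
  assumes h: "h \<in> carrier G"
  shows "assemble (\<lambda>j \<gamma>. e j (shift h \<gamma>)) = act h (assemble e)"
proof -
  let ?F = "\<lambda>\<gamma>. \<Otimes>j\<in>{..<m}. act h (basis j \<gamma>) [^] e j \<gamma>"
  have F: "?F \<in> act_image \<rightarrow> carrier A" using h basis_closed by (auto intro!: A.finprod_closed)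
  have "assemble (\<lambda>j \<gamma>. e j (shift h \<gamma>)) = (\<Otimes>\<gamma>\<in>act_image. ?F (shift h \<gamma>))"
    unfolding assemble_def
    using h basis_shift basis_closed shift_mem[OF h] F
    by (intro A.finprod_cong' refl) (auto simp: Pi_def)
  also have "\<dots> = (\<Otimes>\<gamma>\<in>shift h ` act_image. ?F \<gamma>)"
    using A.finprod_reindex[of ?F "shift h" act_image] F inj_on_shift[OF h] shift_image[OF h] by simp
  also have "\<dots> = (\<Otimes>\<gamma>\<in>act_image. act h (\<Otimes>j\<in>{..<m}. basis j \<gamma> [^] e j \<gamma>))"
    unfolding shift_image[OF h]
  proof (intro A.finprod_cong' refl)
    fix \<gamma> assume \<gamma>: "\<gamma> \<in> act_image"
    have "?F \<gamma> = (\<Otimes>j\<in>{..<m}. act h (basis j \<gamma> [^] e j \<gamma>))"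
      using h basis_closed[OF _ \<gamma>] by (intro A.finprod_cong') auto
    then show "?F \<gamma> = act h (\<Otimes>j\<in>{..<m}. basis j \<gamma> [^] e j \<gamma>)"
      using h basis_closed[OF _ \<gamma>] by (simp add: act_finprod Pi_def)
  qed (use h in \<open>auto simp: assemble_inner_closed\<close>)
  also have "\<dots> = act h (assemble e)"
    unfolding assemble_def using h by (intro act_finprod[symmetric]) (auto simp: assemble_inner_closed)
  finally show ?thesis .
qed

end

section \<open>A weakly bounded cohomologous cocycle\<close>

locale undistorted_action_cocycle = fg_action_cocycle A G act \<sigma> N m \<psi> w
  for A :: "('b, 'n) monoid_scheme" (structure) and G :: "('a, 'm) monoid_scheme"
    and act \<sigma> N m \<psi> w +
  fixes K K1 :: int
  assumes K_nonneg: "K \<ge> 0"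
    and undistorted: "\<And>e. e \<in> carrier extension \<Longrightarrow> coord_norm (fst e) \<le> K * int (len e) + K1"
begin

definition cost :: "nat \<Rightarrow> ('b \<Rightarrow> 'b) \<Rightarrow> 'a \<Rightarrow> 'b \<Rightarrow> int" where
  "cost j \<gamma> g a = K * int (len (a, g)) - \<psi> j (\<gamma> a)"

lemma cost_lower_bound:
  assumes "j < m" "\<gamma> \<in> act_image" "g \<in> carrier G" "a \<in> carrier A"
  shows "- K1 \<le> cost j \<gamma> g a"
proof -
  have "\<psi> j (\<gamma> a) \<le> coord_norm a" using abs_psi_le_coord_norm[OF assms(2,1), of a] by linarith
  also have "\<dots> \<le> K * int (len (a, g)) + K1" using undistorted[of "(a, g)"] assms by simp
  finally show ?thesis unfolding cost_def by simp
qed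

definition argmin_cost :: "nat \<Rightarrow> ('b \<Rightarrow> 'b) \<Rightarrow> 'a \<Rightarrow> 'b" where
  "argmin_cost j \<gamma> g = (SOME a. a \<in> carrier A \<and> (\<forall>b\<in>carrier A. cost j \<gamma> g a \<le> cost j \<gamma> g b))"

definition min_cost :: "nat \<Rightarrow> ('b \<Rightarrow> 'b) \<Rightarrow> 'a \<Rightarrow> int" where
  "min_cost j \<gamma> g = cost j \<gamma> g (argmin_cost j \<gamma> g)"

lemma argmin_cost:
  assumes "j < m" "\<gamma> \<in> act_image" "g \<in> carrier G"
  shows "argmin_cost j \<gamma> g \<in> carrier A" and "\<And>b. b \<in> carrier A \<Longrightarrow> min_cost j \<gamma> g \<le> cost j \<gamma> g b"
proof -
  obtain a where a: "a \<in> carrier A"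
    and least: "\<forall>b. b \<in> carrier A \<longrightarrow> nat (cost j \<gamma> g a + K1) \<le> nat (cost j \<gamma> g b + K1)"
    using ex_has_least_nat[of "\<lambda>a. a \<in> carrier A" \<one> "\<lambda>a. nat (cost j \<gamma> g a + K1)"] by auto
  have "cost j \<gamma> g a \<le> cost j \<gamma> g b" if b: "b \<in> carrier A" for b
  proof -
    have "nat (cost j \<gamma> g a + K1) \<le> nat (cost j \<gamma> g b + K1)" using least b by blast
    moreover have "0 \<le> cost j \<gamma> g b + K1" using cost_lower_bound[OF assms b] by simp
    ultimately show ?thesis by (simp add: nat_le_eq_zle)
  qed
  then have "\<exists>a. a \<in> carrier A \<and> (\<forall>b\<in>carrier A. cost j \<gamma> g a \<le> cost j \<gamma> g b)" using a by blast
  then have "argmin_cost j \<gamma> g \<in> carrier A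
      \<and> (\<forall>b\<in>carrier A. cost j \<gamma> g (argmin_cost j \<gamma> g) \<le> cost j \<gamma> g b)"
    unfolding argmin_cost_def by (rule someI_ex)
  then show "argmin_cost j \<gamma> g \<in> carrier A" "\<And>b. b \<in> carrier A \<Longrightarrow> min_cost j \<gamma> g \<le> cost j \<gamma> g b"
    unfolding min_cost_def by auto
qed

lemma K_mult_mono: "x \<le> y \<Longrightarrow> K * int x \<le> K * int y"
  using K_nonneg by (simp add: mult_left_mono)

lemma min_cost_mult:
  assumes j: "j < m" and \<gamma>: "\<gamma> \<in> act_image" and g: "g \<in> carrier G" and h: "h \<in> carrier G"
  shows "min_cost j \<gamma> (g \<otimes>\<^bsub>G\<^esub> h) \<le> min_cost j (shift h \<gamma>) g + min_cost j \<gamma> h - \<psi> j (\<gamma> (\<sigma> g h))"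
proof -
  have s\<gamma>: "shift h \<gamma> \<in> act_image" using shift_mem[OF h \<gamma>] .
  define a where "a = argmin_cost j (shift h \<gamma>) g"
  define b where "b = argmin_cost j \<gamma> h"
  have a: "a \<in> carrier A" unfolding a_def using argmin_cost[OF j s\<gamma> g] by blast
  have b: "b \<in> carrier A" unfolding b_def using argmin_cost[OF j \<gamma> h] by blast
  define c where "c = act h a \<otimes> b \<otimes> \<sigma> g h"
  have c: "c \<in> carrier A" unfolding c_def using a b g h by simp
  have "len (c, g \<otimes>\<^bsub>G\<^esub> h) \<le> len (a, g) + len (b, h)"
    using len_mult[of "(a, g)" "(b, h)"] a b g h unfolding c_def by simp
  then have "K * int (len (c, g \<otimes>\<^bsub>G\<^esub> h)) \<le> K * int (len (a, g)) + K * int (len (b, h))"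
    using K_mult_mono by (metis of_nat_add distrib_left)
  moreover have "\<psi> j (\<gamma> c) = \<psi> j (shift h \<gamma> a) + \<psi> j (\<gamma> b) + \<psi> j (\<gamma> (\<sigma> g h))"
    unfolding c_def shift_apply[OF a] using a b g h \<gamma> j
    by (simp add: act_image_mult act_image_closed psi_mult)
  moreover have "min_cost j \<gamma> (g \<otimes>\<^bsub>G\<^esub> h) \<le> cost j \<gamma> (g \<otimes>\<^bsub>G\<^esub> h) c"
    using argmin_cost(2)[OF j \<gamma>] g h c by simp
  ultimately show ?thesis unfolding min_cost_def a_def[symmetric] b_def[symmetric] cost_def by linarith
qed

lemma min_cost_cancel_left:
  assumes j: "j < m" and \<gamma>: "\<gamma> \<in> act_image" and g: "g \<in> carrier G" and h: "h \<in> carrier G"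
  shows "min_cost j \<gamma> h
    \<le> K * int (len (inv\<^bsub>extension\<^esub> (\<one>, g))) + min_cost j \<gamma> (g \<otimes>\<^bsub>G\<^esub> h) + \<psi> j (\<gamma> (\<sigma> g h))"
proof -
  have gh: "g \<otimes>\<^bsub>G\<^esub> h \<in> carrier G" using g h by simp
  define c where "c = argmin_cost j \<gamma> (g \<otimes>\<^bsub>G\<^esub> h)"
  have c: "c \<in> carrier A" unfolding c_def using argmin_cost[OF j \<gamma> gh] by blast
  define b where "b = c \<otimes> inv (\<sigma> g h)"
  have b: "b \<in> carrier A" unfolding b_def using c g h by simp
  have prod: "(\<one>, g) \<otimes>\<^bsub>extension\<^esub> (b, h) = (c, g \<otimes>\<^bsub>G\<^esub> h)"
    unfolding b_def using c g h by (simp add: A.m_assoc)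
  have "len (b, h) \<le> len (inv\<^bsub>extension\<^esub> (\<one>, g)) + len (c, g \<otimes>\<^bsub>G\<^esub> h)"
    using len_cancel_left[of "(\<one>, g)" "(b, h)"] b g h unfolding prod by simp
  then have "K * int (len (b, h)) \<le> K * int (len (inv\<^bsub>extension\<^esub> (\<one>, g))) + K * int (len (c, g \<otimes>\<^bsub>G\<^esub> h))"
    using K_mult_mono by (metis of_nat_add distrib_left)
  moreover have "\<psi> j (\<gamma> b) = \<psi> j (\<gamma> c) - \<psi> j (\<gamma> (\<sigma> g h))"
    unfolding b_def using c g h \<gamma> j by (simp add: act_image_mult act_image_inv act_image_closed psi_mult psi_inv)
  moreover have "min_cost j \<gamma> h \<le> cost j \<gamma> h b" using argmin_cost(2)[OF j \<gamma> h] b by simp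
  ultimately show ?thesis unfolding min_cost_def c_def[symmetric] cost_def by linarith
qed

lemma min_cost_cancel_right:
  assumes j: "j < m" and \<gamma>: "\<gamma> \<in> act_image" and g: "g \<in> carrier G" and h: "h \<in> carrier G"
  shows "min_cost j (shift h \<gamma>) g
    \<le> K * int (len (inv\<^bsub>extension\<^esub> (\<one>, h))) + min_cost j \<gamma> (g \<otimes>\<^bsub>G\<^esub> h) + \<psi> j (\<gamma> (\<sigma> g h))"
proof -
  have s\<gamma>: "shift h \<gamma> \<in> act_image" using shift_mem[OF h \<gamma>] .
  have gh: "g \<otimes>\<^bsub>G\<^esub> h \<in> carrier G" using g h by simp
  define c where "c = argmin_cost j \<gamma> (g \<otimes>\<^bsub>G\<^esub> h)"
  have c: "c \<in> carrier A" unfolding c_def using argmin_cost[OF j \<gamma> gh] by blast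
  define a where "a = act (inv\<^bsub>G\<^esub> h) (c \<otimes> inv (\<sigma> g h))"
  have a: "a \<in> carrier A" unfolding a_def using c g h by simp
  have ha: "act h a = c \<otimes> inv (\<sigma> g h)" unfolding a_def using act_act_inv[OF h] c g h by simp
  have prod: "(a, g) \<otimes>\<^bsub>extension\<^esub> (\<one>, h) = (c, g \<otimes>\<^bsub>G\<^esub> h)"
    using ha c g h by (simp add: A.m_assoc)
  have "len (a, g) \<le> len (c, g \<otimes>\<^bsub>G\<^esub> h) + len (inv\<^bsub>extension\<^esub> (\<one>, h))"
    using len_cancel_right[of "(a, g)" "(\<one>, h)"] a g h unfolding prod by simp
  then have "K * int (len (a, g)) \<le> K * int (len (c, g \<otimes>\<^bsub>G\<^esub> h)) + K * int (len (inv\<^bsub>extension\<^esub> (\<one>, h)))"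
    using K_mult_mono by (metis of_nat_add distrib_left)
  moreover have "\<psi> j (shift h \<gamma> a) = \<psi> j (\<gamma> c) - \<psi> j (\<gamma> (\<sigma> g h))"
    unfolding shift_apply[OF a] ha using c g h \<gamma> j
    by (simp add: act_image_mult act_image_inv act_image_closed psi_mult psi_inv)
  moreover have "min_cost j (shift h \<gamma>) g \<le> cost j (shift h \<gamma>) g a" using argmin_cost(2)[OF j s\<gamma> g] a by simp
  ultimately show ?thesis unfolding min_cost_def c_def[symmetric] cost_def by linarith
qed

definition defect :: "nat \<Rightarrow> ('b \<Rightarrow> 'b) \<Rightarrow> 'a \<Rightarrow> 'a \<Rightarrow> int" where
  "defect j \<gamma> g h = min_cost j (shift h \<gamma>) g + min_cost j \<gamma> h - min_cost j \<gamma> (g \<otimes>\<^bsub>G\<^esub> h)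
    - \<psi> j (\<gamma> (\<sigma> g h))"

definition min_cost_bound :: "'a \<Rightarrow> int" where
  "min_cost_bound g = (\<Sum>\<gamma>\<in>act_image. \<Sum>j<m. \<bar>min_cost j \<gamma> g\<bar>)"

lemma min_cost_le_bound: "\<gamma> \<in> act_image \<Longrightarrow> j < m \<Longrightarrow> min_cost j \<gamma> g \<le> min_cost_bound g"
  unfolding min_cost_bound_def using finite_act_image
  by (intro order_trans[OF abs_ge_self order_trans[OF member_le_sum
        member_le_sum[where f = "\<lambda>\<gamma>. \<Sum>j<m. \<bar>min_cost j \<gamma> g\<bar>"]]])
    (auto intro: sum_nonneg)

lemma defect_bounds:
  assumes "j < m" "\<gamma> \<in> act_image" "g \<in> carrier G" "h \<in> carrier G"
  shows "0 \<le> defect j \<gamma> g h"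
    and "defect j \<gamma> g h \<le> K * int (len (inv\<^bsub>extension\<^esub> (\<one>, g))) + min_cost_bound g"
    and "defect j \<gamma> g h \<le> K * int (len (inv\<^bsub>extension\<^esub> (\<one>, h))) + min_cost_bound h"
  using min_cost_mult[OF assms] min_cost_cancel_left[OF assms] min_cost_cancel_right[OF assms]
    min_cost_le_bound[OF shift_mem[OF assms(4,2)] assms(1), of g] min_cost_le_bound[OF assms(2,1), of h]
  unfolding defect_def by linarith+

definition exponent :: nat where
  "exponent = N * card act_image"

lemma exponent_pos: "exponent > 0"
proof -
  have "act_image \<noteq> {}" unfolding act_image_def by auto
  then show ?thesis unfolding exponent_def using N_pos finite_act_image by (simp add: card_gt_0_iff)
qed

definition min_cochain :: "'a \<Rightarrow> 'b" where
  "min_cochain g = assemble (\<lambda>j \<gamma>. min_cost j \<gamma> g)"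

lemma assemble_defect:
  assumes g: "g \<in> carrier G" and h: "h \<in> carrier G"
  shows "assemble (\<lambda>j \<gamma>. defect j \<gamma> g h)
    = inv (\<sigma> g h [^] exponent) \<otimes> act h (min_cochain g) \<otimes> min_cochain h \<otimes> inv (min_cochain (g \<otimes>\<^bsub>G\<^esub> h))"
proof -
  have "assemble (\<lambda>j \<gamma>. defect j \<gamma> g h)
      = assemble (\<lambda>j \<gamma>. (- \<psi> j (\<gamma> (\<sigma> g h)) + min_cost j (shift h \<gamma>) g)
          + (min_cost j \<gamma> h + - min_cost j \<gamma> (g \<otimes>\<^bsub>G\<^esub> h)))"
    unfolding defect_def by (rule assemble_cong) simp
  also have "\<dots> = (inv (\<sigma> g h [^] exponent) \<otimes> act h (min_cochain g))
      \<otimes> (min_cochain h \<otimes> inv (min_cochain (g \<otimes>\<^bsub>G\<^esub> h)))"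
    unfolding assemble_add assemble_neg assemble_coords[OF cocycle_closed[OF g h]]
      assemble_shift[OF h, of "\<lambda>j \<gamma>. min_cost j \<gamma> g"] min_cochain_def exponent_def ..
  also have "\<dots> = inv (\<sigma> g h [^] exponent) \<otimes> act h (min_cochain g) \<otimes> min_cochain h
      \<otimes> inv (min_cochain (g \<otimes>\<^bsub>G\<^esub> h))"
    using g h assemble_closed unfolding min_cochain_def by (simp add: A.m_assoc)
  finally show ?thesis .
qed

definition quot_cochain :: "'a \<Rightarrow> 'b" where
  "quot_cochain g = assemble (\<lambda>j \<gamma>. min_cost j \<gamma> g div int exponent)"

definition rem_cochain :: "'a \<Rightarrow> 'b" where
  "rem_cochain g = assemble (\<lambda>j \<gamma>. min_cost j \<gamma> g mod int exponent)"

lemma min_cochain_split: "min_cochain g = quot_cochain g [^] int exponent \<otimes> rem_cochain g"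
proof -
  have "min_cochain g
      = assemble (\<lambda>j \<gamma>. int exponent * (min_cost j \<gamma> g div int exponent) + min_cost j \<gamma> g mod int exponent)"
    unfolding min_cochain_def by (rule assemble_cong) simp
  then show ?thesis unfolding assemble_add assemble_scale quot_cochain_def rem_cochain_def .
qed

definition correction :: "'a \<Rightarrow> 'b" where
  "correction g = inv (quot_cochain g)"

lemma correction_closed: "correction g \<in> carrier A"
  unfolding correction_def quot_cochain_def using assemble_closed by simp

definition twisted :: "'a \<Rightarrow> 'a \<Rightarrow> 'b" where
  "twisted g h = \<sigma> g h \<otimes> coboundary correction g h"

lemma twisted_closed: "g \<in> carrier G \<Longrightarrow> h \<in> carrier G \<Longrightarrow> twisted g h \<in> carrier A"
  unfolding twisted_def coboundary_def using correction_closed by simp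

lemma correction_pow: "correction g [^] int exponent = inv (min_cochain g \<otimes> inv (rem_cochain g))"
  using min_cochain_split[of g] assemble_closed
  unfolding correction_def quot_cochain_def rem_cochain_def min_cochain_def
  by (simp add: A.int_pow_inv A.m_assoc)

lemma twisted_pow:
  assumes g: "g \<in> carrier G" and h: "h \<in> carrier G"
  shows "twisted g h [^] int exponent
    = inv (assemble (\<lambda>j \<gamma>. defect j \<gamma> g h)) \<otimes> act h (rem_cochain g) \<otimes> rem_cochain h
      \<otimes> inv (rem_cochain (g \<otimes>\<^bsub>G\<^esub> h))"
proof -
  have c: "min_cochain x \<in> carrier A" "rem_cochain x \<in> carrier A" for x
    unfolding min_cochain_def rem_cochain_def by (rule assemble_closed)+
  have "twisted g h [^] int exponent = \<sigma> g h [^] int exponent \<otimes> (act h (correction g [^] int exponent)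
      \<otimes> correction h [^] int exponent \<otimes> inv (correction (g \<otimes>\<^bsub>G\<^esub> h) [^] int exponent))"
    unfolding twisted_def coboundary_def using g h correction_closed
    by (simp add: A.int_pow_distrib A.int_pow_inv)
  also have "\<dots> = inv (inv (\<sigma> g h [^] exponent) \<otimes> act h (min_cochain g) \<otimes> min_cochain h
      \<otimes> inv (min_cochain (g \<otimes>\<^bsub>G\<^esub> h))) \<otimes> act h (rem_cochain g) \<otimes> rem_cochain h
      \<otimes> inv (rem_cochain (g \<otimes>\<^bsub>G\<^esub> h))"
    unfolding correction_pow using g h c
    by (simp add: A.inv_mult A.m_ac int_pow_int del: A.l_inv A.r_inv A.Units_l_inv A.Units_r_inv)
  finally show ?thesis unfolding assemble_defect[OF g h] .
qed

definition bounded_assembly :: "int \<Rightarrow> 'b set" where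
  "bounded_assembly B =
    (\<lambda>d. assemble (\<lambda>j \<gamma>. d (\<gamma>, j))) ` (act_image \<times> {..<m} \<rightarrow>\<^sub>E {0..B})"

lemma finite_bounded_assembly: "finite (bounded_assembly B)"
  unfolding bounded_assembly_def using finite_act_image by (intro finite_imageI finite_PiE) auto

lemma assemble_mem_bounded_assembly:
  assumes "\<And>j \<gamma>. j < m \<Longrightarrow> \<gamma> \<in> act_image \<Longrightarrow> 0 \<le> e j \<gamma> \<and> e j \<gamma> \<le> B"
  shows "assemble e \<in> bounded_assembly B"
proof -
  define d where "d = restrict (\<lambda>p. e (snd p) (fst p)) (act_image \<times> {..<m})"
  have "d \<in> act_image \<times> {..<m} \<rightarrow>\<^sub>E {0..B}" unfolding d_def using assms by auto
  moreover have "assemble e = assemble (\<lambda>j \<gamma>. d (\<gamma>, j))" unfolding d_def by (rule assemble_cong) simp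
  ultimately show ?thesis unfolding bounded_assembly_def by blast
qed

lemma rem_cochain_mem: "rem_cochain g \<in> bounded_assembly (int exponent - 1)"
  unfolding rem_cochain_def using exponent_pos
  by (intro assemble_mem_bounded_assembly) (auto simp: int_ops)

lemma finite_image_if_finite_powers:
  assumes "finite S" and "\<And>x. x \<in> T \<Longrightarrow> f x \<in> carrier A \<and> f x [^] int exponent \<in> S"
  shows "finite (f ` T)"
proof -
  have sub: "f ` T \<subseteq> (\<Union>s\<in>S. {t \<in> carrier A. t [^] exponent = s})"
    using assms(2) by (force simp: int_pow_int)
  have "finite {t \<in> carrier A. t [^] exponent = s}" for s
    using A.finite_roots_if_finite_torsion[OF A.subgroup_self finite_torsion exponent_pos] .
  then have "finite (\<Union>s\<in>S. {t \<in> carrier A. t [^] exponent = s})" using assms(1) by blast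
  then show ?thesis using finite_subset[OF sub] by blast
qed

lemma right_weakly_bounded_twisted: "right_weakly_bounded G twisted"
  unfolding right_weakly_bounded_def
proof
  fix h assume h: "h \<in> carrier G"
  let ?B = "K * int (len (inv\<^bsub>extension\<^esub> (\<one>, h))) + min_cost_bound h"
  let ?R = "bounded_assembly (int exponent - 1)"
  let ?S = "(\<lambda>(x, y, v). inv x \<otimes> y \<otimes> rem_cochain h \<otimes> inv v) ` (bounded_assembly ?B \<times> act h ` ?R \<times> ?R)"
  show "finite ((\<lambda>g. twisted g h) ` carrier G)"
  proof (rule finite_image_if_finite_powers)
    show "finite ?S" using finite_bounded_assembly by simp
    fix g assume g: "g \<in> carrier G"
    have "assemble (\<lambda>j \<gamma>. defect j \<gamma> g h) \<in> bounded_assembly ?B"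
      by (rule assemble_mem_bounded_assembly) (use defect_bounds[OF _ _ g h] in auto)
    then show "twisted g h \<in> carrier A \<and> twisted g h [^] int exponent \<in> ?S"
      unfolding twisted_pow[OF g h] using twisted_closed[OF g h] rem_cochain_mem by force
  qed
qed

lemma left_weakly_bounded_twisted: "left_weakly_bounded G twisted"
  unfolding left_weakly_bounded_def
proof
  fix g assume g: "g \<in> carrier G"
  let ?B = "K * int (len (inv\<^bsub>extension\<^esub> (\<one>, g))) + min_cost_bound g"
  let ?R = "bounded_assembly (int exponent - 1)"
  let ?S = "(\<lambda>(x, y, z, v). inv x \<otimes> y \<otimes> z \<otimes> inv v)
    ` (bounded_assembly ?B \<times> (\<lambda>\<gamma>. \<gamma> (rem_cochain g)) ` act_image \<times> ?R \<times> ?R)"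
  show "finite ((\<lambda>h. twisted g h) ` carrier G)"
  proof (rule finite_image_if_finite_powers)
    show "finite ?S" using finite_bounded_assembly finite_act_image by simp
    fix h assume h: "h \<in> carrier G"
    have "assemble (\<lambda>j \<gamma>. defect j \<gamma> g h) \<in> bounded_assembly ?B"
      by (rule assemble_mem_bounded_assembly) (use defect_bounds[OF _ _ g h] in auto)
    moreover have "act h (rem_cochain g) \<in> (\<lambda>\<gamma>. \<gamma> (rem_cochain g)) ` act_image"
      using h rem_cochain_def assemble_closed
      by (intro image_eqI[where x = "restrict (act h) (carrier A)"]) (auto simp: act_image_def)
    ultimately show "twisted g h \<in> carrier A \<and> twisted g h [^] int exponent \<in> ?S"
      unfolding twisted_pow[OF g h] using twisted_closed[OF g h] rem_cochain_mem by force
  qed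
qed

end

context fg_action_cocycle
begin

lemma exists_weakly_bounded_cohomologous:
  assumes "right_weakly_bounded G \<sigma> \<or> left_weakly_bounded G \<sigma>"
  shows "\<exists>\<tau>. two_cocycle G A act \<tau> \<and> cohomologous G A act \<sigma> \<tau>
    \<and> right_weakly_bounded G \<tau> \<and> left_weakly_bounded G \<tau>"
proof -
  obtain K K1 where "K \<ge> 0"
    and "\<And>e. e \<in> carrier extension \<Longrightarrow> coord_norm (fst e) \<le> K * int (len e) + K1"
    using coord_norm_le_len[OF assms] by blast
  then interpret undistorted_action_cocycle A G act \<sigma> N m \<psi> w K K1
    by unfold_locales
  have f: "correction \<in> carrier G \<rightarrow> carrier A" using correction_closed by blast
  have "two_cocycle G A act twisted"
    unfolding twisted_def[abs_def] by (rule two_cocycle_mult[OF cocycle two_cocycle_coboundary[OF f]])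
  moreover have "cohomologous G A act \<sigma> twisted"
    unfolding cohomologous_def twisted_def coboundary_def using f by blast
  ultimately show ?thesis using right_weakly_bounded_twisted left_weakly_bounded_twisted by blast
qed

end

theorem theorem4p1:
  fixes G :: "('a, 'm) monoid_scheme" and A :: "('b, 'n) monoid_scheme"
    and act :: "'a \<Rightarrow> 'b \<Rightarrow> 'b" and \<sigma> :: "'a \<Rightarrow> 'a \<Rightarrow> 'b"
  assumes "group G" and "fin_gen_group G"
    and "comm_group A" and "fin_gen_group A"
    and "right_action_by_auts G A act"
    and "finite_action_image G A act"
    and "two_cocycle G A act \<sigma>"
    and "right_weakly_bounded G \<sigma> \<or> left_weakly_bounded G \<sigma>"
  shows "\<exists>\<tau>. two_cocycle G A act \<tau> \<and> cohomologous G A act \<sigma> \<tau> \<and>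
             right_weakly_bounded G \<tau> \<and> left_weakly_bounded G \<tau>"
proof -
  interpret A: comm_group A by fact
  obtain S where S: "finite S" "S \<subseteq> carrier A" "generate A S = carrier A"
    using \<open>fin_gen_group A\<close> unfolding fin_gen_group_def by blast
  obtain N m \<psi> w where "int_coordinates A (carrier A) N m \<psi> w"
    using A.int_coordinates_generate[OF S(1,2)] S(3) by auto
  moreover have "finite (torsion A (carrier A))"
    using A.finite_torsion_generate[OF S(1,2)] S(3) by simp
  ultimately interpret fg_action_cocycle A G act \<sigma> N m \<psi> w
    using assms by (simp add: fg_action_cocycle_def fg_action_cocycle_axioms_def
      action_cocycle_def action_cocycle_axioms_def)
  show ?thesis using exists_weakly_bounded_cohomologous assms(8) by blast
qed

end
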